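(* Let $k\ge1$ and consider the following linear maps $\mathcal{D}^k_{0,1}(S^1)\to\mathcal{D}^k_{0,1}(S^1)$, written for $A=\sum_{i=0}^k a_i(x)\frac{d^i}{dx^i}$ in a local coordinate $x$ (with $d=\frac{d}{dx}\in\mathcal{D}^1_{0,1}(S^1)$ the de Rham differential and functions understood as zeroth order operators): $C(A)=\sum_{i=0}^k(-1)^i\big(\frac{d}{dx}\big)^i\circ a_i(x)$; $P_0(A)=a_0(x)$; $P_0^*(A)=\sum_{i=0}^k(-1)^i a_i^{(i)}(x)$; $P_1(A)=\big(\sum_{i=1}^k(-1)^{i-1}a_i^{(i-1)}(x)\big)\circ d$; $L(A)=\big(\int_{S^1}a_0(x)\,dx\big)\, d$. Then these maps belong to $\mathcal{I}^k_{0,1}(S^1)$ and satisfy the following relations (products are compositions): $P_0P_0=P_0$, $P_0C=P_0^*$, $P_0P_0^*=P_0^*$, $P_0P_1=0$, $P_0L=0$; $CP_0=P_0$, $C^2=\mathrm{Id}$, $CP_0^*=P_0^*$, $CP_1=P_0^*-P_1-P_0$, $CL=-L$; $P_0^*P_0=P_0$, $P_0^*C=P_0$, $P_0^*P_0^*=P_0^*$, $P_0^*P_1=P_0^*-P_0$, $P_0^*L=0$; $P_1P_0=0$, $P_1C=-P_1$, $P_1P_0^*=0$, $P_1P_1=P_1$, $P_1L=L$; $LP_0=L$, $LC=L$, $LP_0^*=L$, $LP_1=0$, $LL=0$.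
   Context: $\mathcal{F}_\lambda$ denotes the space of smooth $\lambda$-densities $\phi(x)(dx)^\lambda$ on $S^1$ with $\mathrm{Diff}(S^1)$-action $\rho^\lambda_{f^{-1}}:\phi(x)(dx)^\lambda\mapsto (f'(x))^\lambda\phi(f(x))(dx)^\lambda$; in particular $\mathcal{F}_0$ is functions and $\mathcal{F}_1$ is 1-forms. $\mathcal{D}^k_{0,1}(S^1)$ is the space of linear differential operators $A=\sum_{i=0}^k a_i(x)\frac{d^i}{dx^i}:\mathcal{F}_0\to\mathcal{F}_1$ of order $\le k$, with $\mathrm{Diff}(S^1)$-action $A\mapsto\rho^1_f\circ A\circ\rho^0_{f^{-1}}$. $\mathcal{I}^k_{0,1}(S^1)$ is the associative algebra of linear maps $\mathcal{D}^k_{0,1}(S^1)\to\mathcal{D}^k_{0,1}(S^1)$ commuting with this action. Note that $a_0(x)dx$ is a well-defined 1-form, so $\int_{S^1}a_0\,dx$ is well defined. *)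

theory Defs
  imports "HOL-Analysis.Analysis"
begin

text \<open>The circle S^1 = R/Z; functions on S^1 are 1-periodic functions on R.
  Both F_0 (functions) and F_1 (1-forms phi(x) dx) are represented by their
  coefficient function in the global coordinate x.\<close>

definition smooth :: "(real \<Rightarrow> real) \<Rightarrow> bool" where
  "smooth f \<longleftrightarrow> (\<forall>n x. ((deriv ^^ n) f) differentiable (at x))"

definition SP :: "(real \<Rightarrow> real) set" where
  "SP = {f. smooth f \<and> (\<forall>x. f (x + 1) = f x)}"

type_synonym op = "(real \<Rightarrow> real) \<Rightarrow> (real \<Rightarrow> real)"

definition mkop :: "op \<Rightarrow> op" where
  "mkop F = (\<lambda>\<phi>. if \<phi> \<in> SP then F \<phi> else (\<lambda>x. 0))"

definition is_coeffs :: "nat \<Rightarrow> op \<Rightarrow> (nat \<Rightarrow> real \<Rightarrow> real) \<Rightarrow> bool" where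
  "is_coeffs k A a \<longleftrightarrow> (\<forall>i. a i \<in> SP) \<and> (\<forall>i>k. a i = (\<lambda>x. 0)) \<and>
     (\<forall>\<phi>\<in>SP. A \<phi> = (\<lambda>x. \<Sum>i\<le>k. a i x * (deriv ^^ i) \<phi> x))"

text \<open>D^k_{0,1}(S^1): differential operators of order at most k from functions to 1-forms.\<close>
definition Dk :: "nat \<Rightarrow> op set" where
  "Dk k = {A. (\<exists>a. is_coeffs k A a) \<and> (\<forall>\<phi>. \<phi> \<notin> SP \<longrightarrow> A \<phi> = (\<lambda>x. 0))}"

definition coeffs :: "nat \<Rightarrow> op \<Rightarrow> nat \<Rightarrow> real \<Rightarrow> real" where
  "coeffs k A = (THE a. is_coeffs k A a)"

definition opadd :: "op \<Rightarrow> op \<Rightarrow> op" where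
  "opadd A B = (\<lambda>\<phi> x. A \<phi> x + B \<phi> x)"

definition opscale :: "real \<Rightarrow> op \<Rightarrow> op" where
  "opscale c A = (\<lambda>\<phi> x. c * A \<phi> x)"

text \<open>Lifts to R of orientation preserving diffeomorphisms of S^1 = R/Z.\<close>
definition Diffp :: "(real \<Rightarrow> real) set" where
  "Diffp = {f. smooth f \<and> (\<forall>x. deriv f x > 0) \<and> (\<forall>x. f (x + 1) = f x + 1)}"

text \<open>rho^lambda_{f^{-1}} : phi(x) (dx)^lambda \<mapsto> (f'(x))^lambda phi(f(x)) (dx)^lambda.\<close>
definition rho_inv :: "real \<Rightarrow> (real \<Rightarrow> real) \<Rightarrow> (real \<Rightarrow> real) \<Rightarrow> (real \<Rightarrow> real)" where
  "rho_inv lam f \<phi> = (\<lambda>x. (deriv f x) powr lam * \<phi> (f x))"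

text \<open>The action A \<mapsto> rho^1_f o A o rho^0_{f^{-1}}, where rho^1_f = rho^1_{(f^{-1})^{-1}}.\<close>
definition act :: "(real \<Rightarrow> real) \<Rightarrow> op \<Rightarrow> op" where
  "act f A = mkop (\<lambda>\<phi>. rho_inv 1 (inv f) (A (rho_inv 0 f \<phi>)))"

definition Ik :: "nat \<Rightarrow> (op \<Rightarrow> op) set" where
  "Ik k = {T. (\<forall>A\<in>Dk k. T A \<in> Dk k) \<and>
     (\<forall>A\<in>Dk k. \<forall>B\<in>Dk k. T (opadd A B) = opadd (T A) (T B)) \<and>
     (\<forall>c. \<forall>A\<in>Dk k. T (opscale c A) = opscale c (T A)) \<and>
     (\<forall>f\<in>Diffp. \<forall>A\<in>Dk k. T (act f A) = act f (T A))}"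

definition Cmap :: "nat \<Rightarrow> op \<Rightarrow> op" where
  "Cmap k A = mkop (\<lambda>\<phi> x. \<Sum>i\<le>k. (-1) ^ i * (deriv ^^ i) (\<lambda>y. coeffs k A i y * \<phi> y) x)"

definition P0 :: "nat \<Rightarrow> op \<Rightarrow> op" where
  "P0 k A = mkop (\<lambda>\<phi> x. coeffs k A 0 x * \<phi> x)"

definition P0s :: "nat \<Rightarrow> op \<Rightarrow> op" where
  "P0s k A = mkop (\<lambda>\<phi> x. (\<Sum>i\<le>k. (-1) ^ i * (deriv ^^ i) (coeffs k A i) x) * \<phi> x)"

definition P1 :: "nat \<Rightarrow> op \<Rightarrow> op" where
  "P1 k A = mkop (\<lambda>\<phi> x. (\<Sum>i\<in>{1..k}. (-1) ^ (i - 1) * (deriv ^^ (i - 1)) (coeffs k A i) x)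
                         * deriv \<phi> x)"

definition Lmap :: "nat \<Rightarrow> op \<Rightarrow> op" where
  "Lmap k A = mkop (\<lambda>\<phi> x. integral {0..1} (coeffs k A 0) * deriv \<phi> x)"

definition zero_op :: op where
  "zero_op = (\<lambda>\<phi> x. 0)"

definition opminus :: "op \<Rightarrow> op \<Rightarrow> op" where
  "opminus A B = (\<lambda>\<phi> x. A \<phi> x - B \<phi> x)"

definition opneg :: "op \<Rightarrow> op" where
  "opneg A = (\<lambda>\<phi> x. - A \<phi> x)"

end

theory Submission
  imports Defs "HOL-Computational_Algebra.Polynomial"
begin

text \<open>
  An operator in \<open>D\<^sup>k\<close> determines its coefficients, because the derivatives of the periodic
  exponentials \<open>exp (2\<pi>imx)\<close> at a point are linearly independent. \<open>P\<^sub>0\<close>, \<open>P\<^sub>0\<^sup>*\<close>,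
  \<open>P\<^sub>1\<close> and \<open>L\<close> produce operators of the form \<open>h \<phi>\<close> or \<open>h \<phi>'\<close>, and \<open>C\<close> is the formal
  adjoint for the pairing \<open>\<integral>\<^sub>0\<^sup>1 \<psi> A\<phi>\<close> of functions with 1-forms, whence \<open>C\<circ>C = Id\<close>;
  as this pairing is invariant under diffeomorphisms, \<open>C\<close> commutes with the action.
  The coefficient \<open>b\<close> of \<open>P\<^sub>1(A)\<close> is \<open>G(1)\<close>, where \<open>G\<close> is the differential operator
  of order \<open>k - 1\<close> with \<open>(G\<phi>)' = A\<phi> - P\<^sub>0\<^sup>*(A)\<phi>\<close> produced by integration by parts.
  Such a \<open>G\<close> is unique, which gives both the naturality of \<open>b\<close> and \<open>b(C(A)) = -b(A)\<close>.
  The composition table is then a computation with operators \<open>h \<phi>\<close> and \<open>h \<phi>'\<close>.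
\<close>

abbreviation Dn :: "nat \<Rightarrow> (real \<Rightarrow> real) \<Rightarrow> real \<Rightarrow> real" where
  "Dn n \<equiv> deriv ^^ n"

lemma Dn_Suc_inner: "Dn (Suc n) f = Dn n (deriv f)"
  by (simp add: funpow_Suc_right del: funpow.simps)

lemma Dn_const: "Dn n (\<lambda>x. c) = (\<lambda>x. if n = 0 then c else 0)"
  by (induction n) auto

lemma real_differentiable_iff_field_differentiable:
  "(f :: real \<Rightarrow> real) differentiable (at x) \<longleftrightarrow> f field_differentiable (at x)"
  by (metis DERIV_deriv_iff_real_differentiable DERIV_deriv_iff_field_differentiable)

fun differentiable_upto :: "nat \<Rightarrow> (real \<Rightarrow> real) \<Rightarrow> bool" where
  "differentiable_upto 0 f \<longleftrightarrow> (\<forall>x. f field_differentiable (at x))"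
| "differentiable_upto (Suc n) f \<longleftrightarrow>
     (\<forall>x. f field_differentiable (at x)) \<and> differentiable_upto n (deriv f)"

lemma differentiable_upto_iff:
  "differentiable_upto n f \<longleftrightarrow> (\<forall>m\<le>n. \<forall>x. Dn m f field_differentiable (at x))"
proof (induction n arbitrary: f)
  case (Suc n)
  have "(\<forall>m\<le>Suc n. P m) \<longleftrightarrow> P 0 \<and> (\<forall>m\<le>n. P (Suc m))" for P
    by (metis Suc_le_mono le0 not0_implies_Suc)
  then show ?case
    using Suc.IH by (simp only: differentiable_upto.simps Dn_Suc_inner) simp
qed simp

lemma smooth_iff_differentiable_upto: "smooth f \<longleftrightarrow> (\<forall>n. differentiable_upto n f)"
  unfolding smooth_def differentiable_upto_iff real_differentiable_iff_field_differentiable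
  by blast

lemma differentiable_upto_imp_field_differentiable:
  "differentiable_upto n f \<Longrightarrow> f field_differentiable (at x)"
  by (cases n) auto

lemma differentiable_upto_Suc_imp: "differentiable_upto (Suc n) f \<Longrightarrow> differentiable_upto n f"
  by (induction n arbitrary: f) auto

lemma differentiable_upto_const: "differentiable_upto n (\<lambda>x. c)"
  by (induction n arbitrary: c) simp_all

lemma differentiable_upto_add:
  "differentiable_upto n f \<Longrightarrow> differentiable_upto n g \<Longrightarrow> differentiable_upto n (\<lambda>x. f x + g x)"
proof (induction n arbitrary: f g)
  case (Suc n)
  then have "deriv (\<lambda>x. f x + g x) = (\<lambda>x. deriv f x + deriv g x)"
    by (simp add: fun_eq_iff)
  with Suc show ?case
    by (auto intro: field_differentiable_add)
qed (auto intro: field_differentiable_add)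

lemma differentiable_upto_mult:
  "differentiable_upto n f \<Longrightarrow> differentiable_upto n g \<Longrightarrow> differentiable_upto n (\<lambda>x. f x * g x)"
proof (induction n arbitrary: f g)
  case (Suc n)
  then have "deriv (\<lambda>x. f x * g x) = (\<lambda>x. f x * deriv g x + deriv f x * g x)"
    by (simp add: fun_eq_iff)
  moreover have "differentiable_upto n (\<lambda>x. f x * deriv g x + deriv f x * g x)"
    using Suc.prems Suc.IH[of f "deriv g"] Suc.IH[of "deriv f" g]
      differentiable_upto_Suc_imp[of n f] differentiable_upto_Suc_imp[of n g]
    by (intro differentiable_upto_add) auto
  ultimately show ?case
    using Suc.prems by (auto intro: field_differentiable_mult)
qed (auto intro: field_differentiable_mult)

lemma differentiable_upto_compose:
  "differentiable_upto n f \<Longrightarrow> differentiable_upto n g \<Longrightarrow> differentiable_upto n (\<lambda>x. f (g x))"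
proof (induction n arbitrary: f g)
  case 0
  then show ?case
    using field_differentiable_compose[of g _ f] by (auto simp: o_def)
next
  case (Suc n)
  have diff: "\<forall>x. (\<lambda>x. f (g x)) field_differentiable (at x)"
    using Suc.prems field_differentiable_compose[of g _ f] by (auto simp: o_def)
  have "deriv (\<lambda>x. f (g x)) = (\<lambda>x. deriv f (g x) * deriv g x)"
    using Suc.prems deriv_chain[of g _ f] by (auto simp: o_def fun_eq_iff)
  moreover have "differentiable_upto n (\<lambda>x. deriv f (g x) * deriv g x)"
    using Suc.prems Suc.IH[of "deriv f" g] differentiable_upto_Suc_imp[of n g]
    by (intro differentiable_upto_mult) auto
  ultimately show ?case
    using diff by simp
qed

lemma differentiable_upto_inverse:
  "differentiable_upto n f \<Longrightarrow> (\<And>x. f x \<noteq> 0) \<Longrightarrow> differentiable_upto n (\<lambda>x. inverse (f x))"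
proof (induction n arbitrary: f)
  case (Suc n)
  have "deriv (\<lambda>x. inverse (f x)) = (\<lambda>x. (- deriv f x) * (inverse (f x) * inverse (f x)))"
    using Suc.prems by (simp add: fun_eq_iff divide_inverse power2_eq_square)
  moreover have "differentiable_upto n (\<lambda>x. - deriv f x)"
    using Suc.prems differentiable_upto_mult[OF differentiable_upto_const, of n "deriv f" "-1"]
    by simp
  moreover have "differentiable_upto n (\<lambda>x. inverse (f x))"
    using Suc.prems Suc.IH[of f] differentiable_upto_Suc_imp[of n f] by blast
  ultimately have "differentiable_upto n (deriv (\<lambda>x. inverse (f x)))"
    using differentiable_upto_mult[of n "\<lambda>x. - deriv f x" "\<lambda>x. inverse (f x) * inverse (f x)"]
      differentiable_upto_mult[of n "\<lambda>x. inverse (f x)" "\<lambda>x. inverse (f x)"]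
    by simp
  then show ?case
    using Suc.prems by (auto intro: field_differentiable_inverse)
qed (auto intro: field_differentiable_inverse)

lemma smooth_const: "smooth (\<lambda>x. c)"
  by (simp add: smooth_iff_differentiable_upto differentiable_upto_const)

lemma smooth_add: "smooth f \<Longrightarrow> smooth g \<Longrightarrow> smooth (\<lambda>x. f x + g x)"
  by (simp add: smooth_iff_differentiable_upto differentiable_upto_add)

lemma smooth_mult: "smooth f \<Longrightarrow> smooth g \<Longrightarrow> smooth (\<lambda>x. f x * g x)"
  by (simp add: smooth_iff_differentiable_upto differentiable_upto_mult)

lemma smooth_compose: "smooth f \<Longrightarrow> smooth g \<Longrightarrow> smooth (\<lambda>x. f (g x))"
  by (simp add: smooth_iff_differentiable_upto differentiable_upto_compose)

lemma smooth_cmult: "smooth f \<Longrightarrow> smooth (\<lambda>x. c * f x)"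
  by (rule smooth_mult[OF smooth_const])

lemma smooth_diff: "smooth f \<Longrightarrow> smooth g \<Longrightarrow> smooth (\<lambda>x. f x - g x)"
  using smooth_add[of f "\<lambda>x. (-1) * g x"] smooth_cmult[of g "-1"] by simp

lemma smooth_sum:
  "(\<And>i. i \<in> S \<Longrightarrow> smooth (f i)) \<Longrightarrow> smooth (\<lambda>x. \<Sum>i\<in>S. f i x)"
  by (induction S rule: infinite_finite_induct) (auto intro: smooth_add smooth_const)

lemma smooth_deriv: "smooth f \<Longrightarrow> smooth (deriv f)"
  unfolding smooth_def by (metis Dn_Suc_inner)

lemma smooth_Dn: "smooth f \<Longrightarrow> smooth (Dn n f)"
  by (induction n) (auto simp: smooth_deriv)

lemma smooth_field_differentiable: "smooth f \<Longrightarrow> f field_differentiable (at x)"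
  by (simp add: smooth_iff_differentiable_upto differentiable_upto_imp_field_differentiable)

lemma smooth_has_real_derivative: "smooth f \<Longrightarrow> (f has_real_derivative deriv f x) (at x)"
  by (simp add: DERIV_deriv_iff_field_differentiable smooth_field_differentiable)

lemma smooth_continuous_on: "smooth f \<Longrightarrow> continuous_on S f"
  by (meson continuous_at_imp_continuous_on field_differentiable_imp_continuous_at
      smooth_field_differentiable)

lemma deriv_add_smooth:
  "smooth f \<Longrightarrow> smooth g \<Longrightarrow> deriv (\<lambda>x. f x + g x) = (\<lambda>x. deriv f x + deriv g x)"
  by (simp add: fun_eq_iff smooth_field_differentiable)

lemma deriv_diff_smooth:
  "smooth f \<Longrightarrow> smooth g \<Longrightarrow> deriv (\<lambda>x. f x - g x) = (\<lambda>x. deriv f x - deriv g x)"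
  by (simp add: fun_eq_iff smooth_field_differentiable)

lemma deriv_mult_smooth:
  "smooth f \<Longrightarrow> smooth g \<Longrightarrow> deriv (\<lambda>x. f x * g x) = (\<lambda>x. f x * deriv g x + deriv f x * g x)"
  by (simp add: fun_eq_iff smooth_field_differentiable)

lemma deriv_cmult_smooth: "smooth f \<Longrightarrow> deriv (\<lambda>x. c * f x) = (\<lambda>x. c * deriv f x)"
  by (simp add: fun_eq_iff smooth_field_differentiable)

lemma deriv_sum_smooth:
  "(\<And>i. i \<in> S \<Longrightarrow> smooth (f i)) \<Longrightarrow>
    deriv (\<lambda>x. \<Sum>i\<in>S. f i x) = (\<lambda>x. \<Sum>i\<in>S. deriv (f i) x)"
proof (induction S rule: infinite_finite_induct)
  case (insert i S)
  then show ?case by (simp add: deriv_add_smooth smooth_sum)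
qed simp_all

lemma Dn_add_smooth:
  "smooth f \<Longrightarrow> smooth g \<Longrightarrow> Dn n (\<lambda>x. f x + g x) = (\<lambda>x. Dn n f x + Dn n g x)"
  by (induction n) (simp_all add: deriv_add_smooth smooth_Dn)

lemma Dn_cmult_smooth: "smooth f \<Longrightarrow> Dn n (\<lambda>x. c * f x) = (\<lambda>x. c * Dn n f x)"
  by (induction n) (simp_all add: deriv_cmult_smooth smooth_Dn)


lemma periodic_shift_int:
  assumes "\<And>x. f (x + 1) = f x"
  shows "f (x + of_int n) = f x"
proof -
  have nat_shift: "f (y + of_nat m) = f y" for y m
  proof (induction m)
    case (Suc m)
    have "f (y + of_nat (Suc m)) = f ((y + of_nat m) + 1)"
      by (simp add: algebra_simps)
    with Suc assms show ?case by simp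
  qed simp
  show ?thesis
  proof (cases "n \<ge> 0")
    case True
    then show ?thesis using nat_shift[of x "nat n"] by simp
  next
    case False
    then show ?thesis using nat_shift[of "x + of_int n" "nat (- n)"] by simp
  qed
qed

lemma deriv_periodic:
  assumes "\<And>x. f (x + 1) = f x"
  shows "deriv f (x + 1) = deriv f x"
proof -
  have "(\<lambda>y. f (y + 1)) = f" using assms by auto
  then show ?thesis
    unfolding deriv_def using DERIV_shift[of f _ x 1] by simp
qed

lemma SP_smooth: "f \<in> SP \<Longrightarrow> smooth f"
  by (simp add: SP_def)

lemma SP_periodic: "f \<in> SP \<Longrightarrow> f (x + 1) = f x"
  by (simp add: SP_def)

lemma SP_shift_int: "f \<in> SP \<Longrightarrow> f (x + of_int n) = f x"
  by (simp add: SP_def periodic_shift_int)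

lemma SP_const: "(\<lambda>x. c) \<in> SP"
  by (simp add: SP_def smooth_const)

lemma SP_add: "f \<in> SP \<Longrightarrow> g \<in> SP \<Longrightarrow> (\<lambda>x. f x + g x) \<in> SP"
  by (simp add: SP_def smooth_add)

lemma SP_diff: "f \<in> SP \<Longrightarrow> g \<in> SP \<Longrightarrow> (\<lambda>x. f x - g x) \<in> SP"
  by (simp add: SP_def smooth_diff)

lemma SP_mult: "f \<in> SP \<Longrightarrow> g \<in> SP \<Longrightarrow> (\<lambda>x. f x * g x) \<in> SP"
  by (simp add: SP_def smooth_mult)

lemma SP_cmult: "f \<in> SP \<Longrightarrow> (\<lambda>x. c * f x) \<in> SP"
  by (simp add: SP_def smooth_cmult)

lemma SP_sum: "(\<And>i. i \<in> S \<Longrightarrow> f i \<in> SP) \<Longrightarrow> (\<lambda>x. \<Sum>i\<in>S. f i x) \<in> SP"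
  by (induction S rule: infinite_finite_induct) (auto intro: SP_add SP_const)

lemma SP_deriv: "f \<in> SP \<Longrightarrow> deriv f \<in> SP"
  by (simp add: SP_def smooth_deriv deriv_periodic)

lemma SP_Dn: "f \<in> SP \<Longrightarrow> Dn n f \<in> SP"
  by (induction n) (auto simp: SP_deriv)

lemma Diffp_smooth: "f \<in> Diffp \<Longrightarrow> smooth f"
  by (simp add: Diffp_def)

lemma Diffp_deriv_pos: "f \<in> Diffp \<Longrightarrow> deriv f x > 0"
  by (simp add: Diffp_def)

lemma Diffp_shift: "f \<in> Diffp \<Longrightarrow> f (x + 1) = f x + 1"
  by (simp add: Diffp_def)

lemma Diffp_shift_int: "f \<in> Diffp \<Longrightarrow> f (x + of_int n) = f x + of_int n"
  using periodic_shift_int[of "\<lambda>x. f x - x" x n] by (simp add: Diffp_shift)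

lemma Diffp_strict_mono:
  assumes "f \<in> Diffp"
  shows "strict_mono f"
proof (rule strict_monoI)
  have "\<exists>d. (f has_real_derivative d) (at z) \<and> d > 0" for z
    using assms by (blast intro: smooth_has_real_derivative Diffp_smooth Diffp_deriv_pos)
  then show "x < y \<Longrightarrow> f x < f y" for x y
    by (metis DERIV_pos_imp_increasing)
qed

lemma Diffp_surj:
  assumes "f \<in> Diffp"
  shows "surj f"
proof (rule surjI)
  fix y
  define n where "n = \<lfloor>y - f 0\<rfloor>"
  have "f (of_int n) = f 0 + of_int n"
    using Diffp_shift_int[OF assms, of 0 n] by simp
  then have "f (of_int n) \<le> y" "y \<le> f (of_int n + 1)"
    using Diffp_shift[OF assms, of "of_int n"] n_def by linarith+
  moreover have "continuous_on {of_int n .. of_int n + 1} f"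
    using assms by (intro smooth_continuous_on Diffp_smooth)
  ultimately show "f (inv f y) = y"
    using IVT'[of f "of_int n" y "of_int n + 1"] by (auto intro: f_inv_into_f)
qed

lemma Diffp_f_inv: "f \<in> Diffp \<Longrightarrow> f (inv f y) = y"
  by (meson Diffp_surj surj_f_inv_f)

lemma Diffp_inv_f: "f \<in> Diffp \<Longrightarrow> inv f (f x) = x"
  by (meson Diffp_strict_mono strict_mono_imp_inj_on inv_f_f)

lemma Diffp_inv_shift: "f \<in> Diffp \<Longrightarrow> inv f (y + 1) = inv f y + 1"
  by (metis Diffp_f_inv Diffp_inv_f Diffp_shift)

lemma Diffp_inv_has_real_derivative:
  assumes "f \<in> Diffp"
  shows "(inv f has_real_derivative inverse (deriv f (inv f y))) (at y)"
proof -
  have "isCont f x" for x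
    using assms
    by (simp add: Diffp_smooth smooth_field_differentiable field_differentiable_imp_continuous_at)
  then have "isCont (inv f) (f (inv f y))"
    using isCont_inverse_function[where d = 1 and x = "inv f y" and f = f and g = "inv f"] assms
    by (simp add: Diffp_inv_f)
  then have "isCont (inv f) y"
    using assms by (simp add: Diffp_f_inv)
  moreover have "(f has_real_derivative deriv f (inv f y)) (at (inv f y))"
    using assms by (simp add: Diffp_smooth smooth_has_real_derivative)
  moreover have "deriv f (inv f y) \<noteq> 0"
    using Diffp_deriv_pos[OF assms, of "inv f y"] by simp
  moreover have "f (inv f z) = z" for z
    using assms by (rule Diffp_f_inv)
  ultimately show ?thesis
    by (intro DERIV_inverse_function[where a = "y - 1" and b = "y + 1"]) simp_all
qed

lemma Diffp_deriv_inv: "f \<in> Diffp \<Longrightarrow> deriv (inv f) = (\<lambda>y. inverse (deriv f (inv f y)))"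
  using Diffp_inv_has_real_derivative DERIV_imp_deriv by blast

lemma Diffp_deriv_mult_deriv_inv: "f \<in> Diffp \<Longrightarrow> deriv f (inv f y) * deriv (inv f) y = 1"
  using Diffp_deriv_pos[of f "inv f y"] by (simp add: Diffp_deriv_inv)

lemma Diffp_inv_smooth:
  assumes "f \<in> Diffp"
  shows "smooth (inv f)"
  unfolding smooth_iff_differentiable_upto
proof
  have diff: "\<forall>y. inv f field_differentiable (at y)"
    using Diffp_inv_has_real_derivative[OF assms] field_differentiable_def by blast
  fix n
  show "differentiable_upto n (inv f)"
  proof (induction n)
    case (Suc n)
    have "differentiable_upto n (deriv f)"
      using assms smooth_iff_differentiable_upto by (blast intro: smooth_deriv Diffp_smooth)
    then have "differentiable_upto n (\<lambda>y. deriv f (inv f y))"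
      using Suc.IH by (rule differentiable_upto_compose)
    then have "differentiable_upto n (\<lambda>y. inverse (deriv f (inv f y)))"
      by (rule differentiable_upto_inverse) (metis Diffp_deriv_pos[OF assms] less_irrefl)
    then show ?case
      using diff by (simp add: Diffp_deriv_inv[OF assms])
  qed (use diff in simp)
qed

lemma Diffp_inv:
  assumes "f \<in> Diffp"
  shows "inv f \<in> Diffp"
  using Diffp_inv_smooth[OF assms] Diffp_inv_shift[OF assms] Diffp_deriv_pos[OF assms]
  by (simp add: Diffp_def Diffp_deriv_inv[OF assms])

lemma Diffp_deriv_SP:
  assumes "f \<in> Diffp"
  shows "deriv f \<in> SP"
proof -
  have "deriv f (x + 1) = deriv f x" for x
  proof -
    have "deriv f (x + 1) = deriv (\<lambda>y. f (y + 1)) x"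
      unfolding deriv_def using DERIV_shift[of f _ x 1] by simp
    also have "\<dots> = deriv (\<lambda>y. f y + 1) x"
      using assms by (simp add: Diffp_shift)
    also have "\<dots> = deriv f x"
      using assms by (simp add: Diffp_smooth smooth_field_differentiable)
    finally show ?thesis .
  qed
  then show ?thesis
    using assms by (simp add: SP_def Diffp_smooth smooth_deriv)
qed

lemma SP_compose_Diffp: "\<phi> \<in> SP \<Longrightarrow> f \<in> Diffp \<Longrightarrow> (\<lambda>x. \<phi> (f x)) \<in> SP"
  by (simp add: SP_def Diffp_def smooth_compose)

section \<open>Integration over a period\<close>

abbreviation period_integral :: "(real \<Rightarrow> real) \<Rightarrow> real" where
  "period_integral h \<equiv> integral {0..1} h"

lemma SP_integrable: "h \<in> SP \<Longrightarrow> h integrable_on {a..b}"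
  by (intro integrable_continuous_real smooth_continuous_on SP_smooth)

lemma period_integral_add:
  "f \<in> SP \<Longrightarrow> g \<in> SP \<Longrightarrow> period_integral (\<lambda>x. f x + g x) = period_integral f + period_integral g"
  by (intro integral_add SP_integrable)

lemma period_integral_diff:
  "f \<in> SP \<Longrightarrow> g \<in> SP \<Longrightarrow> period_integral (\<lambda>x. f x - g x) = period_integral f - period_integral g"
  by (intro integral_diff SP_integrable)

lemma period_integral_sum:
  "finite S \<Longrightarrow> (\<And>i. i \<in> S \<Longrightarrow> f i \<in> SP) \<Longrightarrow>
    period_integral (\<lambda>x. \<Sum>i\<in>S. f i x) = (\<Sum>i\<in>S. period_integral (f i))"
  by (intro integral_sum) (auto intro: SP_integrable)

lemma period_integral_deriv:
  assumes "u \<in> SP"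
  shows "period_integral (deriv u) = 0"
proof -
  have "(u has_real_derivative deriv u x) (at x within {0..1})" for x
    using assms by (intro has_field_derivative_at_within[OF smooth_has_real_derivative] SP_smooth)
  then have "(deriv u has_integral (u 1 - u 0)) {0..1}"
    by (intro fundamental_theorem_of_calculus)
      (simp_all flip: has_real_derivative_iff_has_vector_derivative)
  moreover have "u 1 = u 0"
    using SP_periodic[OF assms, of 0] by simp
  ultimately show ?thesis
    by (simp add: integral_unique)
qed

lemma period_integral_by_parts:
  assumes "u \<in> SP" "v \<in> SP"
  shows "period_integral (\<lambda>x. u x * deriv v x) = - period_integral (\<lambda>x. deriv u x * v x)"
proof -
  have "deriv (\<lambda>x. u x * v x) = (\<lambda>x. u x * deriv v x + deriv u x * v x)"
    using assms by (intro deriv_mult_smooth SP_smooth)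
  then have "0 = period_integral (\<lambda>x. u x * deriv v x + deriv u x * v x)"
    using period_integral_deriv[OF SP_mult[OF assms]] by simp
  also have "\<dots> = period_integral (\<lambda>x. u x * deriv v x) + period_integral (\<lambda>x. deriv u x * v x)"
    using assms by (intro period_integral_add SP_mult SP_deriv)
  finally show ?thesis
    by linarith
qed

lemma period_integral_by_parts_Dn:
  assumes "u \<in> SP" "v \<in> SP"
  shows "period_integral (\<lambda>x. u x * Dn n v x) = (-1) ^ n * period_integral (\<lambda>x. Dn n u x * v x)"
  using assms(1)
proof (induction n arbitrary: u)
  case (Suc n)
  have "period_integral (\<lambda>x. u x * Dn (Suc n) v x) = - period_integral (\<lambda>x. deriv u x * Dn n v x)"
    using Suc.prems assms(2) period_integral_by_parts[of u "Dn n v"] by (simp add: SP_Dn)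
  also have "period_integral (\<lambda>x. deriv u x * Dn n v x)
      = (-1) ^ n * period_integral (\<lambda>x. Dn n (deriv u) x * v x)"
    using Suc.prems by (intro Suc.IH SP_deriv)
  also have "Dn n (deriv u) = Dn (Suc n) u"
    by (rule Dn_Suc_inner[symmetric])
  finally show ?case
    by simp
qed simp

lemma SP_eq_0_if_orthogonal:
  assumes "h \<in> SP" and orth: "\<And>\<psi>. \<psi> \<in> SP \<Longrightarrow> period_integral (\<lambda>x. \<psi> x * h x) = 0"
  shows "h = (\<lambda>x. 0)"
proof
  fix x :: real
  have "period_integral (\<lambda>x. h x * h x) = 0"
    using orth[OF assms(1)] .
  then have "\<forall>t\<in>{0..1}. h t * h t = 0"
    using integral_eq_0_iff[of 0 1 "\<lambda>x. h x * h x"] SP_mult[OF assms(1) assms(1)]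
    by (simp add: smooth_continuous_on SP_smooth)
  moreover have "0 \<le> x - of_int \<lfloor>x\<rfloor>" "x - of_int \<lfloor>x\<rfloor> \<le> 1"
    using floor_correct[of x] by linarith+
  ultimately have "h (x - of_int \<lfloor>x\<rfloor>) = 0"
    by simp
  then show "h x = 0"
    using SP_shift_int[OF assms(1), of "x - of_int \<lfloor>x\<rfloor>" "\<lfloor>x\<rfloor>"] by simp
qed

lemma period_integral_shift:
  assumes "u \<in> SP"
  shows "integral {c..c + 1} u = period_integral u"
proof -
  define n where "n = \<lfloor>c\<rfloor>"
  define t where "t = c - of_int n"
  have t: "0 \<le> t" "t < 1"
    unfolding t_def n_def by linarith+
  have shift: "integral {a..b} u = integral {a + of_int m..b + of_int m} u" for a b m
  proof -
    have "u \<circ> (\<lambda>x. x + of_int m) = u"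
      using SP_shift_int[OF assms] by (auto simp: o_def)
    then show ?thesis
      using integral_shift[OF smooth_continuous_on[OF SP_smooth[OF assms]], of a b "of_int m"]
      by simp
  qed
  have "integral {c..c + 1} u = integral {c..of_int n + 1} u + integral {of_int n + 1..c + 1} u"
    using t SP_integrable[OF assms]
      Henstock_Kurzweil_Integration.integral_combine[of c "of_int n + 1" "c + 1" u]
    unfolding t_def by simp
  also have "integral {c..of_int n + 1} u = integral {t..1} u"
    using shift[of t 1 n] by (simp add: t_def add.commute)
  also have "integral {of_int n + 1..c + 1} u = integral {0..t} u"
    using shift[of 0 t "n + 1"] by (simp add: t_def add.commute)
  also have "integral {t..1} u + integral {0..t} u = period_integral u"
    using t SP_integrable[OF assms] Henstock_Kurzweil_Integration.integral_combine[of 0 t 1 u]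
    by simp
  finally show ?thesis .
qed

lemma period_integral_Diffp_substitution:
  assumes "g \<in> Diffp" "u \<in> SP"
  shows "period_integral (\<lambda>x. deriv g x * u (g x)) = period_integral u"
proof -
  have "((\<lambda>x. deriv g x *\<^sub>R u (g x)) has_integral (integral {g 0..g 1} u)) {0..1}"
  proof (rule has_integral_substitution[where c = "g 0" and d = "g 1"])
    show "g 0 \<le> g 1" "g ` {0..1} \<subseteq> {g 0..g 1}"
      using Diffp_strict_mono[OF assms(1)] by (auto simp: strict_mono_less_eq)
    show "continuous_on {g 0..g 1} u"
      using assms(2) by (intro smooth_continuous_on SP_smooth)
    show "(g has_real_derivative deriv g x) (at x within {0..1})" for x
      using assms(1)
      by (intro has_field_derivative_at_within[OF smooth_has_real_derivative] Diffp_smooth)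
  qed simp
  moreover have "g 1 = g 0 + 1"
    using Diffp_shift[OF assms(1), of 0] by simp
  ultimately show ?thesis
    using period_integral_shift[OF assms(2), of "g 0"] by (simp add: integral_unique)
qed

section \<open>Coefficients of a differential operator\<close>

definition re_exp :: "complex \<Rightarrow> complex \<Rightarrow> real \<Rightarrow> real" where
  "re_exp w c = (\<lambda>x. Re (w * exp (c * of_real x)))"

lemma re_exp_has_real_derivative: "(re_exp w c has_real_derivative re_exp (w * c) c x) (at x)"
proof -
  have "((\<lambda>z. w * exp (c * z)) has_field_derivative w * (exp (c * of_real x) * c)) (at (of_real x))"
    by (auto intro!: derivative_eq_intros)
  then have "((\<lambda>y. w * exp (c * of_real y))
      has_vector_derivative w * (exp (c * of_real x) * c)) (at x)"
    by (rule has_vector_derivative_real_field)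
  then show ?thesis
    unfolding re_exp_def using has_field_derivative_Re by (fastforce simp: ac_simps)
qed

lemma deriv_re_exp: "deriv (re_exp w c) = re_exp (w * c) c"
  using re_exp_has_real_derivative DERIV_imp_deriv by blast

lemma Dn_re_exp: "Dn n (re_exp w c) = re_exp (w * c ^ n) c"
  by (induction n) (simp_all add: deriv_re_exp ac_simps)

lemma re_exp_SP: "re_exp w (\<i> * of_real (2 * pi * of_nat m)) \<in> SP"
proof -
  let ?c = "\<i> * of_real (2 * pi * of_nat m)"
  have "exp ?c = 1"
    using exp_integer_2pi[of "of_nat m"] by (simp add: ac_simps)
  then have "re_exp w ?c (x + 1) = re_exp w ?c x" for x
    unfolding re_exp_def by (simp add: distrib_left exp_add)
  moreover have "smooth (re_exp w c)" for c
    unfolding smooth_def Dn_re_exp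
    using re_exp_has_real_derivative real_differentiable_def by blast
  ultimately show ?thesis
    by (simp add: SP_def)
qed

text \<open>Testing against the periodic exponentials \<open>exp (2\<pi>imx)\<close> shows that the polynomial
  \<open>\<Sum>i\<le>n. a\<^sub>i z\<^sup>i\<close> has the infinitely many roots \<open>2\<pi>im\<close>, so it is zero.\<close>

lemma Dn_combination_root:
  fixes a :: "nat \<Rightarrow> real"
  assumes vanish: "\<And>\<phi>. \<phi> \<in> SP \<Longrightarrow> (\<Sum>i\<le>n. a i * Dn i \<phi> x0) = 0"
  shows "(\<Sum>i\<le>n. complex_of_real (a i) * (\<i> * of_real (2 * pi * of_nat m)) ^ i) = 0"
proof -
  define c where "c = \<i> * of_real (2 * pi * of_nat m)"
  define z0 where "z0 = exp (c * of_real x0)"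
  have "z0 \<noteq> 0"
    by (simp add: z0_def)
  have "Re (v * (\<Sum>i\<le>n. of_real (a i) * c ^ i)) = 0" for v
  proof -
    have Dn_at: "Dn i (re_exp (v * inverse z0) c) x0 = Re (v * c ^ i)" for i
      using \<open>z0 \<noteq> 0\<close> unfolding Dn_re_exp unfolding re_exp_def z0_def
      by (simp add: field_simps)
    have "0 = (\<Sum>i\<le>n. a i * Dn i (re_exp (v * inverse z0) c) x0)"
      using vanish[OF re_exp_SP[of "v * inverse z0" m]] by (simp add: c_def)
    also have "\<dots> = Re (\<Sum>i\<le>n. v * (of_real (a i) * c ^ i))"
      by (simp add: Dn_at Re_sum algebra_simps)
    finally show ?thesis
      by (simp add: sum_distrib_left)
  qed
  from this[of 1] this[of "- \<i>"] show ?thesis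
    by (simp add: c_def complex_eq_iff)
qed

lemma Dn_linear_independent:
  fixes a :: "nat \<Rightarrow> real"
  assumes "\<And>\<phi>. \<phi> \<in> SP \<Longrightarrow> (\<Sum>i\<le>n. a i * Dn i \<phi> x0) = 0" "i \<le> n"
  shows "a i = 0"
proof -
  define P where "P = (\<Sum>i\<le>n. monom (complex_of_real (a i)) i)"
  have "P = 0"
  proof (rule ccontr)
    assume "P \<noteq> 0"
    have "inj (\<lambda>m::nat. \<i> * complex_of_real (2 * pi * of_nat m))"
      by (rule injI) (simp add: complex_eq_iff)
    then have "infinite (range (\<lambda>m::nat. \<i> * complex_of_real (2 * pi * of_nat m)))"
      using finite_imageD by blast
    moreover have "range (\<lambda>m::nat. \<i> * of_real (2 * pi * of_nat m)) \<subseteq> {z. poly P z = 0}"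
      using Dn_combination_root[OF assms(1)] by (auto simp: P_def poly_sum poly_monom)
    ultimately show False
      using poly_roots_finite[OF \<open>P \<noteq> 0\<close>] finite_subset by blast
  qed
  then have "coeff P i = 0"
    by simp
  moreover have "coeff P i = complex_of_real (a i)"
    using assms(2) by (simp add: P_def coeff_sum)
  ultimately show ?thesis
    by simp
qed

definition diffop :: "nat \<Rightarrow> (nat \<Rightarrow> real \<Rightarrow> real) \<Rightarrow> op" where
  "diffop n a \<phi> = (\<lambda>x. \<Sum>i\<le>n. a i x * Dn i \<phi> x)"

definition is_diffop :: "nat \<Rightarrow> op \<Rightarrow> bool" where
  "is_diffop n F \<longleftrightarrow> (\<exists>a. (\<forall>i. a i \<in> SP) \<and> (\<forall>\<phi>\<in>SP. F \<phi> = diffop n a \<phi>))"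

definition coeffs_upto :: "nat \<Rightarrow> (nat \<Rightarrow> real \<Rightarrow> real) \<Rightarrow> nat \<Rightarrow> real \<Rightarrow> real" where
  "coeffs_upto n a = (\<lambda>i. if i \<le> n then a i else (\<lambda>x. 0))"

lemma diffop_coeffs_upto: "diffop n (coeffs_upto n a) = diffop n a"
  unfolding diffop_def coeffs_upto_def by (intro ext sum.cong) auto

lemma coeffs_upto_SP: "(\<And>i. a i \<in> SP) \<Longrightarrow> coeffs_upto n a i \<in> SP"
  by (simp add: coeffs_upto_def SP_const)

lemma diffop_SP: "(\<And>i. a i \<in> SP) \<Longrightarrow> \<phi> \<in> SP \<Longrightarrow> diffop n a \<phi> \<in> SP"
  unfolding diffop_def by (intro SP_sum SP_mult SP_Dn)

lemma is_diffop_SP: "is_diffop n F \<Longrightarrow> \<phi> \<in> SP \<Longrightarrow> F \<phi> \<in> SP"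
  unfolding is_diffop_def using diffop_SP by metis

lemma diffop_coeffs_unique:
  assumes "\<And>\<phi>. \<phi> \<in> SP \<Longrightarrow> diffop n a \<phi> = diffop n b \<phi>" "i \<le> n"
  shows "a i = b i"
proof
  fix x0
  have "(\<Sum>i\<le>n. (a i x0 - b i x0) * Dn i \<phi> x0) = 0" if "\<phi> \<in> SP" for \<phi>
    using assms(1)[OF that]
    by (simp add: diffop_def fun_eq_iff left_diff_distrib sum_subtractf)
  from Dn_linear_independent[OF this assms(2)] show "a i x0 = b i x0"
    by simp
qed

lemma is_coeffs_iff_diffop:
  "is_coeffs k A a \<longleftrightarrow>
     (\<forall>i. a i \<in> SP) \<and> (\<forall>i>k. a i = (\<lambda>x. 0)) \<and> (\<forall>\<phi>\<in>SP. A \<phi> = diffop k a \<phi>)"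
  unfolding is_coeffs_def diffop_def by simp

lemma is_coeffs_unique:
  assumes "is_coeffs k A a" "is_coeffs k A b"
  shows "a = b"
proof
  fix i
  show "a i = b i"
  proof (cases "i \<le> k")
    case True
    then show ?thesis
      using assms diffop_coeffs_unique[of k a b i] by (auto simp: is_coeffs_iff_diffop)
  next
    case False
    then show ?thesis
      using assms by (auto simp: is_coeffs_iff_diffop)
  qed
qed

lemma coeffs_eqI: "is_coeffs k A a \<Longrightarrow> coeffs k A = a"
  unfolding coeffs_def using is_coeffs_unique by blast

lemma Dk_is_coeffs: "A \<in> Dk k \<Longrightarrow> is_coeffs k A (coeffs k A)"
  unfolding Dk_def using coeffs_eqI by auto

lemma Dk_coeffs_SP: "A \<in> Dk k \<Longrightarrow> coeffs k A i \<in> SP"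
  using Dk_is_coeffs is_coeffs_iff_diffop by blast

lemma Dk_apply: "A \<in> Dk k \<Longrightarrow> \<phi> \<in> SP \<Longrightarrow> A \<phi> = diffop k (coeffs k A) \<phi>"
  using Dk_is_coeffs is_coeffs_iff_diffop by blast

lemma Dk_coeffs_above: "A \<in> Dk k \<Longrightarrow> k < i \<Longrightarrow> coeffs k A i = (\<lambda>x. 0)"
  using Dk_is_coeffs is_coeffs_iff_diffop by blast

lemma Dk_outside_SP: "A \<in> Dk k \<Longrightarrow> \<phi> \<notin> SP \<Longrightarrow> A \<phi> = (\<lambda>x. 0)"
  unfolding Dk_def by blast

lemma Dk_is_diffop: "A \<in> Dk k \<Longrightarrow> is_diffop k A"
  unfolding is_diffop_def using Dk_coeffs_SP Dk_apply by blast

lemma Dk_apply_SP: "A \<in> Dk k \<Longrightarrow> \<phi> \<in> SP \<Longrightarrow> A \<phi> \<in> SP"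
  using is_diffop_SP Dk_is_diffop by blast

lemma mkop_apply: "\<phi> \<in> SP \<Longrightarrow> mkop F \<phi> = F \<phi>"
  by (simp add: mkop_def)

lemma mkop_outside_SP: "\<phi> \<notin> SP \<Longrightarrow> mkop F \<phi> = (\<lambda>x. 0)"
  by (simp add: mkop_def)

lemma mkop_cong: "(\<And>\<phi>. \<phi> \<in> SP \<Longrightarrow> F \<phi> = G \<phi>) \<Longrightarrow> mkop F = mkop G"
  unfolding mkop_def by auto

lemma is_coeffs_mkop_diffop:
  "(\<And>i. a i \<in> SP) \<Longrightarrow> is_coeffs k (mkop (diffop k a)) (coeffs_upto k a)"
  unfolding is_coeffs_iff_diffop
  by (auto simp: coeffs_upto_SP mkop_apply diffop_coeffs_upto) (simp add: coeffs_upto_def)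

lemma coeffs_mkop_diffop: "(\<And>i. a i \<in> SP) \<Longrightarrow> coeffs k (mkop (diffop k a)) = coeffs_upto k a"
  using is_coeffs_mkop_diffop coeffs_eqI by blast

lemma mkop_diffop_Dk: "(\<And>i. a i \<in> SP) \<Longrightarrow> mkop (diffop k a) \<in> Dk k"
  unfolding Dk_def using is_coeffs_mkop_diffop mkop_outside_SP by blast

lemma mkop_Dk: "is_diffop k F \<Longrightarrow> mkop F \<in> Dk k"
  unfolding is_diffop_def by (metis mkop_cong mkop_diffop_Dk)

lemma is_diffop_cong: "is_diffop n F \<Longrightarrow> (\<And>\<phi>. \<phi> \<in> SP \<Longrightarrow> G \<phi> = F \<phi>) \<Longrightarrow> is_diffop n G"
  unfolding is_diffop_def by auto

lemma is_diffop_monomial: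
  assumes "h \<in> SP" "j \<le> n"
  shows "is_diffop n (\<lambda>\<phi> x. h x * Dn j \<phi> x)"
  unfolding is_diffop_def
proof (intro exI conjI allI ballI)
  let ?a = "\<lambda>i. if i = j then h else (\<lambda>x. 0)"
  show "?a i \<in> SP" for i
    using assms by (simp add: SP_const)
  show "(\<lambda>x. h x * Dn j \<phi> x) = diffop n ?a \<phi>" for \<phi>
    using assms(2) by (simp add: diffop_def if_distrib if_distribR sum.delta cong: if_cong)
qed

lemma is_diffop_id: "is_diffop n (\<lambda>\<phi>. \<phi>)"
proof (rule is_diffop_cong)
  show "is_diffop n (\<lambda>\<phi> x. 1 * Dn 0 \<phi> x)"
    by (rule is_diffop_monomial) (simp_all add: SP_const)
qed simp

lemma is_diffop_zero: "is_diffop n (\<lambda>\<phi> x. 0)"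
  unfolding is_diffop_def by (rule exI[of _ "\<lambda>i x. 0"]) (auto simp: diffop_def SP_const)

lemma is_diffop_add:
  assumes "is_diffop n F" "is_diffop n G"
  shows "is_diffop n (\<lambda>\<phi> x. F \<phi> x + G \<phi> x)"
proof -
  obtain a where "\<And>i. a i \<in> SP" "\<And>\<phi>. \<phi> \<in> SP \<Longrightarrow> F \<phi> = diffop n a \<phi>"
    using assms(1) unfolding is_diffop_def by blast
  moreover obtain b where "\<And>i. b i \<in> SP" "\<And>\<phi>. \<phi> \<in> SP \<Longrightarrow> G \<phi> = diffop n b \<phi>"
    using assms(2) unfolding is_diffop_def by blast
  ultimately show ?thesis
    unfolding is_diffop_def
    by (intro exI[of _ "\<lambda>i x. a i x + b i x"])
      (auto simp: SP_add diffop_def distrib_right sum.distrib)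
qed

lemma is_diffop_mult:
  assumes "h \<in> SP" "is_diffop n F"
  shows "is_diffop n (\<lambda>\<phi> x. h x * F \<phi> x)"
proof -
  obtain a where "\<And>i. a i \<in> SP" "\<And>\<phi>. \<phi> \<in> SP \<Longrightarrow> F \<phi> = diffop n a \<phi>"
    using assms(2) unfolding is_diffop_def by blast
  then show ?thesis
    unfolding is_diffop_def
    by (intro exI[of _ "\<lambda>i x. h x * a i x"])
      (auto simp: assms(1) SP_mult diffop_def sum_distrib_left ac_simps)
qed

lemma is_diffop_cmult: "is_diffop n F \<Longrightarrow> is_diffop n (\<lambda>\<phi> x. c * F \<phi> x)"
  by (rule is_diffop_mult[OF SP_const])

lemma is_diffop_diff:
  "is_diffop n F \<Longrightarrow> is_diffop n G \<Longrightarrow> is_diffop n (\<lambda>\<phi> x. F \<phi> x - G \<phi> x)"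
  using is_diffop_add[of n F "\<lambda>\<phi> x. (-1) * G \<phi> x"] is_diffop_cmult[of n G "-1"] by simp

lemma is_diffop_sum:
  "(\<And>i. i \<in> S \<Longrightarrow> is_diffop n (F i)) \<Longrightarrow> is_diffop n (\<lambda>\<phi> x. \<Sum>i\<in>S. F i \<phi> x)"
proof (induction S rule: infinite_finite_induct)
  case (insert j S)
  then have "is_diffop n (\<lambda>\<phi> x. F j \<phi> x + (\<Sum>i\<in>S. F i \<phi> x))"
    by (intro is_diffop_add) auto
  with insert show ?case
    by simp
qed (simp_all add: is_diffop_zero)

lemma is_diffop_mono:
  assumes "is_diffop n F" "n \<le> m"
  shows "is_diffop m F"
proof -
  obtain a where a: "\<And>i. a i \<in> SP" "\<And>\<phi>. \<phi> \<in> SP \<Longrightarrow> F \<phi> = diffop n a \<phi>"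
    using assms(1) unfolding is_diffop_def by blast
  have "is_diffop m (\<lambda>\<phi> x. \<Sum>i\<le>n. a i x * Dn i \<phi> x)"
    using assms(2) by (intro is_diffop_sum is_diffop_monomial a) auto
  then show ?thesis
    by (rule is_diffop_cong) (simp add: a diffop_def)
qed

lemma is_diffop_deriv:
  assumes "is_diffop n F"
  shows "is_diffop (Suc n) (\<lambda>\<phi>. deriv (F \<phi>))"
proof -
  obtain a where a: "\<And>i. a i \<in> SP" "\<And>\<phi>. \<phi> \<in> SP \<Longrightarrow> F \<phi> = diffop n a \<phi>"
    using assms(1) unfolding is_diffop_def by blast
  have "is_diffop (Suc n) (\<lambda>\<phi> x. \<Sum>i\<le>n. a i x * Dn (Suc i) \<phi> x + deriv (a i) x * Dn i \<phi> x)"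
    by (intro is_diffop_sum is_diffop_add is_diffop_monomial a SP_deriv) auto
  then show ?thesis
  proof (rule is_diffop_cong)
    fix \<phi> :: "real \<Rightarrow> real"
    assume "\<phi> \<in> SP"
    then show "deriv (F \<phi>) = (\<lambda>x. \<Sum>i\<le>n. a i x * Dn (Suc i) \<phi> x + deriv (a i) x * Dn i \<phi> x)"
      using a
      by (simp add: diffop_def deriv_sum_smooth deriv_mult_smooth SP_smooth SP_mult SP_Dn)
  qed
qed

lemma is_diffop_Dn: "is_diffop n F \<Longrightarrow> is_diffop (n + m) (\<lambda>\<phi>. Dn m (F \<phi>))"
proof (induction m)
  case (Suc m)
  then show ?case
    using is_diffop_deriv[OF Suc.IH] by simp
qed simp

section \<open>The action of diffeomorphisms on operators\<close>

lemma act_eq: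
  assumes "f \<in> Diffp"
  shows "act f A = mkop (\<lambda>\<phi> x. deriv (inv f) x * A (\<lambda>y. \<phi> (f y)) (inv f x))"
proof -
  have "deriv f x powr 0 = 1" "deriv (inv f) x powr 1 = deriv (inv f) x" for x
    using Diffp_deriv_pos[OF assms, of x] Diffp_deriv_pos[OF Diffp_inv[OF assms], of x] by simp_all
  then show ?thesis
    unfolding act_def rho_inv_def by simp
qed

lemma act_apply:
  "f \<in> Diffp \<Longrightarrow> \<phi> \<in> SP \<Longrightarrow> act f A \<phi> = (\<lambda>x. deriv (inv f) x * A (\<lambda>y. \<phi> (f y)) (inv f x))"
  by (simp add: act_eq mkop_apply)

lemma act_mkop:
  assumes "f \<in> Diffp"
  shows "act f (mkop F) = mkop (\<lambda>\<phi> x. deriv (inv f) x * F (\<lambda>y. \<phi> (f y)) (inv f x))"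
  unfolding act_eq[OF assms] by (rule mkop_cong) (simp add: mkop_apply SP_compose_Diffp[OF _ assms])

lemma SP_compose_inv_Diffp: "h \<in> SP \<Longrightarrow> f \<in> Diffp \<Longrightarrow> (\<lambda>x. h (inv f x)) \<in> SP"
  by (simp add: SP_compose_Diffp Diffp_inv)

lemma deriv_compose_inv_Diffp:
  assumes "f \<in> Diffp" "smooth u"
  shows "deriv (\<lambda>x. u (inv f x)) x = deriv u (inv f x) * deriv (inv f) x"
  using DERIV_chain2[OF smooth_has_real_derivative[OF assms(2)]
      smooth_has_real_derivative[OF Diffp_inv_smooth[OF assms(1)]]]
  by (rule DERIV_imp_deriv)

lemma is_diffop_conj_Dn:
  assumes "f \<in> Diffp"
  shows "is_diffop i (\<lambda>\<phi> x. Dn i (\<lambda>y. \<phi> (f y)) (inv f x))"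
proof (induction i)
  case 0
  show ?case
  proof (rule is_diffop_cong[OF is_diffop_id])
    show "(\<lambda>x. Dn 0 (\<lambda>y. \<phi> (f y)) (inv f x)) = \<phi>" for \<phi> :: "real \<Rightarrow> real"
      by (simp add: Diffp_f_inv[OF assms])
  qed
next
  case (Suc i)
  have "is_diffop (Suc i) (\<lambda>\<phi> x. deriv f (inv f x) * deriv (\<lambda>x. Dn i (\<lambda>y. \<phi> (f y)) (inv f x)) x)"
    by (rule is_diffop_mult[OF SP_compose_inv_Diffp[OF Diffp_deriv_SP[OF assms] assms]
          is_diffop_deriv[OF Suc.IH]])
  then show ?case
  proof (rule is_diffop_cong)
    fix \<phi> :: "real \<Rightarrow> real"
    assume "\<phi> \<in> SP"
    let ?u = "Dn i (\<lambda>y. \<phi> (f y))"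
    have "smooth ?u"
      using SP_compose_Diffp[OF \<open>\<phi> \<in> SP\<close> assms] by (intro smooth_Dn SP_smooth)
    have "Dn (Suc i) (\<lambda>y. \<phi> (f y)) (inv f x) = deriv f (inv f x) * deriv (\<lambda>x. ?u (inv f x)) x"
      for x
    proof -
      have "Dn (Suc i) (\<lambda>y. \<phi> (f y)) (inv f x)
          = deriv ?u (inv f x) * (deriv f (inv f x) * deriv (inv f) x)"
        by (simp add: Diffp_deriv_mult_deriv_inv[OF assms])
      also have "\<dots> = deriv f (inv f x) * deriv (\<lambda>x. ?u (inv f x)) x"
        by (simp add: deriv_compose_inv_Diffp[OF assms \<open>smooth ?u\<close>] mult.left_commute)
      finally show ?thesis .
    qed
    then show "(\<lambda>x. Dn (Suc i) (\<lambda>y. \<phi> (f y)) (inv f x))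
        = (\<lambda>x. deriv f (inv f x) * deriv (\<lambda>x. ?u (inv f x)) x)"
      by (rule ext)
  qed
qed

lemma is_diffop_conj:
  assumes "is_diffop n F" "f \<in> Diffp"
  shows "is_diffop n (\<lambda>\<phi> x. F (\<lambda>y. \<phi> (f y)) (inv f x))"
proof -
  obtain a where a: "\<And>i. a i \<in> SP" "\<And>\<phi>. \<phi> \<in> SP \<Longrightarrow> F \<phi> = diffop n a \<phi>"
    using assms(1) unfolding is_diffop_def by blast
  have "is_diffop n (\<lambda>\<phi> x. \<Sum>i\<le>n. a i (inv f x) * Dn i (\<lambda>y. \<phi> (f y)) (inv f x))"
    using assms(2)
    by (intro is_diffop_sum is_diffop_mult[OF SP_compose_inv_Diffp[OF a(1)]]
        is_diffop_mono[OF is_diffop_conj_Dn]) auto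
  then show ?thesis
    by (rule is_diffop_cong) (simp add: a SP_compose_Diffp[OF _ assms(2)] diffop_def)
qed

lemma act_Dk:
  assumes "A \<in> Dk k" "f \<in> Diffp"
  shows "act f A \<in> Dk k"
  unfolding act_eq[OF assms(2)]
  by (rule mkop_Dk[OF is_diffop_mult[OF Diffp_deriv_SP[OF Diffp_inv[OF assms(2)]]
        is_diffop_conj[OF Dk_is_diffop[OF assms(1)] assms(2)]]])

definition mult_op :: "(real \<Rightarrow> real) \<Rightarrow> op" where
  "mult_op h = mkop (\<lambda>\<phi> x. h x * \<phi> x)"

definition deriv_op :: "(real \<Rightarrow> real) \<Rightarrow> op" where
  "deriv_op h = mkop (\<lambda>\<phi> x. h x * deriv \<phi> x)"

definition single_coeff :: "nat \<Rightarrow> (real \<Rightarrow> real) \<Rightarrow> nat \<Rightarrow> real \<Rightarrow> real" where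
  "single_coeff j h = (\<lambda>i. if i = j then h else (\<lambda>x. 0))"

definition P0s_coeff :: "nat \<Rightarrow> (nat \<Rightarrow> real \<Rightarrow> real) \<Rightarrow> real \<Rightarrow> real" where
  "P0s_coeff k a = (\<lambda>x. \<Sum>i\<le>k. (-1) ^ i * Dn i (a i) x)"

definition P1_coeff :: "nat \<Rightarrow> (nat \<Rightarrow> real \<Rightarrow> real) \<Rightarrow> real \<Rightarrow> real" where
  "P1_coeff k a = (\<lambda>x. \<Sum>j<k. (-1) ^ j * Dn j (a (Suc j)) x)"

definition formal_adjoint :: "nat \<Rightarrow> (nat \<Rightarrow> real \<Rightarrow> real) \<Rightarrow> op" where
  "formal_adjoint k a \<phi> = (\<lambda>x. \<Sum>i\<le>k. (-1) ^ i * Dn i (\<lambda>y. a i y * \<phi> y) x)"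

lemma P0_eq_mult_op: "P0 k A = mult_op (coeffs k A 0)"
  by (simp add: P0_def mult_op_def)

lemma P0s_eq_mult_op: "P0s k A = mult_op (P0s_coeff k (coeffs k A))"
  by (simp add: P0s_def mult_op_def P0s_coeff_def)

lemma P1_eq_deriv_op: "P1 k A = deriv_op (P1_coeff k (coeffs k A))"
  by (simp add: P1_def deriv_op_def P1_coeff_def sum.atLeast1_atMost_eq)

lemma Lmap_eq_deriv_op: "Lmap k A = deriv_op (\<lambda>x. period_integral (coeffs k A 0))"
  by (simp add: Lmap_def deriv_op_def)

lemma Cmap_eq_formal_adjoint: "Cmap k A = mkop (formal_adjoint k (coeffs k A))"
  by (simp add: Cmap_def formal_adjoint_def[abs_def])

lemma single_coeff_same: "single_coeff j h j = h"
  by (simp add: single_coeff_def)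

lemma single_coeff_other: "i \<noteq> j \<Longrightarrow> single_coeff j h i = (\<lambda>x. 0)"
  by (simp add: single_coeff_def)

lemma single_coeff_SP: "h \<in> SP \<Longrightarrow> single_coeff j h i \<in> SP"
  by (simp add: single_coeff_def SP_const)

lemma sum_single_coeff:
  assumes "j \<le> k" "\<And>i. g i (\<lambda>x. 0) = (\<lambda>x. 0)"
  shows "(\<lambda>x. \<Sum>i\<le>k. g i (single_coeff j h i) x) = g j h"
proof
  fix x
  have "(\<Sum>i\<le>k. g i (single_coeff j h i) x) = (\<Sum>i\<le>k. if i = j then g j h x else 0)"
    using assms(2) by (intro sum.cong) (auto simp: single_coeff_def)
  then show "(\<Sum>i\<le>k. g i (single_coeff j h i) x) = g j h x"
    using assms(1) by simp
qed

lemma diffop_single_coeff: "j \<le> k \<Longrightarrow> diffop k (single_coeff j h) \<phi> = (\<lambda>x. h x * Dn j \<phi> x)"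
  using sum_single_coeff[of j k "\<lambda>i a x. a x * Dn i \<phi> x"] by (simp add: diffop_def)

lemma P0s_coeff_single_coeff: "j \<le> k \<Longrightarrow> P0s_coeff k (single_coeff j h) = (\<lambda>x. (-1) ^ j * Dn j h x)"
  using sum_single_coeff[of j k "\<lambda>i a x. (-1) ^ i * Dn i a x"]
  by (simp add: P0s_coeff_def Dn_const)

lemma formal_adjoint_single_coeff:
  "j \<le> k \<Longrightarrow> formal_adjoint k (single_coeff j h) \<phi> = (\<lambda>x. (-1) ^ j * Dn j (\<lambda>y. h y * \<phi> y) x)"
  using sum_single_coeff[of j k "\<lambda>i a x. (-1) ^ i * Dn i (\<lambda>y. a y * \<phi> y) x"]
  by (simp add: formal_adjoint_def Dn_const)

lemma P1_coeff_single_coeff_0: "P1_coeff k (single_coeff 0 h) = (\<lambda>x. 0)"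
  by (simp add: P1_coeff_def single_coeff_def Dn_const)

lemma P1_coeff_single_coeff_Suc:
  assumes "j < k"
  shows "P1_coeff k (single_coeff (Suc j) h) = (\<lambda>x. (-1) ^ j * Dn j h x)"
proof -
  obtain m where "k = Suc m" "j \<le> m"
    using assms by (cases k) auto
  moreover have "single_coeff (Suc j) h (Suc i) = single_coeff j h i" for i
    by (simp add: single_coeff_def)
  ultimately show ?thesis
    using sum_single_coeff[of j m "\<lambda>i a x. (-1) ^ i * Dn i a x" h]
    by (simp add: P1_coeff_def Dn_const lessThan_Suc_atMost)
qed

lemma coeffs_upto_single_coeff: "j \<le> k \<Longrightarrow> coeffs_upto k (single_coeff j h) = single_coeff j h"
  by (auto simp: coeffs_upto_def single_coeff_def)

lemma mult_op_eq_diffop: "mult_op h = mkop (diffop k (single_coeff 0 h))"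
  unfolding mult_op_def
  by (rule arg_cong[where f = mkop]) (simp add: fun_eq_iff diffop_single_coeff)

lemma deriv_op_eq_diffop: "1 \<le> k \<Longrightarrow> deriv_op h = mkop (diffop k (single_coeff 1 h))"
  unfolding deriv_op_def
  by (rule arg_cong[where f = mkop]) (simp add: fun_eq_iff diffop_single_coeff)

lemma coeffs_mult_op: "h \<in> SP \<Longrightarrow> coeffs k (mult_op h) = single_coeff 0 h"
  by (simp add: mult_op_eq_diffop[of h k] coeffs_mkop_diffop single_coeff_SP
      coeffs_upto_single_coeff)

lemma coeffs_deriv_op: "h \<in> SP \<Longrightarrow> 1 \<le> k \<Longrightarrow> coeffs k (deriv_op h) = single_coeff 1 h"
  by (simp add: deriv_op_eq_diffop[of k h] coeffs_mkop_diffop single_coeff_SP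
      coeffs_upto_single_coeff)

lemma mult_op_Dk: "h \<in> SP \<Longrightarrow> mult_op h \<in> Dk k"
  by (simp add: mult_op_eq_diffop[of h k] mkop_diffop_Dk single_coeff_SP)

lemma deriv_op_Dk: "h \<in> SP \<Longrightarrow> 1 \<le> k \<Longrightarrow> deriv_op h \<in> Dk k"
  by (simp add: deriv_op_eq_diffop[of k h] mkop_diffop_Dk single_coeff_SP)

lemma mult_op_zero: "mult_op (\<lambda>x. 0) = zero_op"
  by (auto simp: mult_op_def mkop_def zero_op_def)

lemma deriv_op_zero: "deriv_op (\<lambda>x. 0) = zero_op"
  by (auto simp: deriv_op_def mkop_def zero_op_def)

lemma P0s_coeff_SP: "(\<And>i. a i \<in> SP) \<Longrightarrow> P0s_coeff k a \<in> SP"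
  unfolding P0s_coeff_def by (intro SP_sum SP_cmult SP_Dn)

lemma P1_coeff_SP: "(\<And>i. a i \<in> SP) \<Longrightarrow> P1_coeff k a \<in> SP"
  unfolding P1_coeff_def by (intro SP_sum SP_cmult SP_Dn)

lemma is_diffop_Dn_mult: "h \<in> SP \<Longrightarrow> j \<le> n \<Longrightarrow> is_diffop n (\<lambda>\<phi>. Dn j (\<lambda>y. h y * \<phi> y))"
  using is_diffop_Dn[OF is_diffop_mult[OF _ is_diffop_id], of h 0 j] by (auto intro: is_diffop_mono)

lemma is_diffop_formal_adjoint: "(\<And>i. a i \<in> SP) \<Longrightarrow> is_diffop k (formal_adjoint k a)"
  unfolding formal_adjoint_def[abs_def]
  by (intro is_diffop_sum is_diffop_cmult is_diffop_Dn_mult) auto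

lemma Cmap_Dk: "A \<in> Dk k \<Longrightarrow> Cmap k A \<in> Dk k"
  unfolding Cmap_eq_formal_adjoint by (intro mkop_Dk is_diffop_formal_adjoint Dk_coeffs_SP)

lemma P0_Dk: "A \<in> Dk k \<Longrightarrow> P0 k A \<in> Dk k"
  unfolding P0_eq_mult_op by (intro mult_op_Dk Dk_coeffs_SP)

lemma P0s_Dk: "A \<in> Dk k \<Longrightarrow> P0s k A \<in> Dk k"
  unfolding P0s_eq_mult_op by (intro mult_op_Dk P0s_coeff_SP Dk_coeffs_SP)

lemma P1_Dk: "A \<in> Dk k \<Longrightarrow> 1 \<le> k \<Longrightarrow> P1 k A \<in> Dk k"
  unfolding P1_eq_deriv_op by (intro deriv_op_Dk P1_coeff_SP Dk_coeffs_SP)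

lemma Lmap_Dk: "1 \<le> k \<Longrightarrow> Lmap k A \<in> Dk k"
  unfolding Lmap_eq_deriv_op by (intro deriv_op_Dk SP_const)

lemma diffop_one: "diffop k a (\<lambda>x. 1) = a 0"
  using sum_single_coeff[of 0 k "\<lambda>i a x. a x * Dn i (\<lambda>x. 1) x"]
  by (simp add: diffop_def Dn_const if_distrib cong: if_cong)

lemma coeffs_zero_eq_apply_one: "A \<in> Dk k \<Longrightarrow> coeffs k A 0 = A (\<lambda>x. 1)"
  by (simp add: Dk_apply SP_const diffop_one)

lemma formal_adjoint_one: "formal_adjoint k a (\<lambda>x. 1) = P0s_coeff k a"
  by (simp add: formal_adjoint_def P0s_coeff_def)

lemma Cmap_apply_one: "Cmap k A (\<lambda>x. 1) = P0s_coeff k (coeffs k A)"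
  by (simp add: Cmap_eq_formal_adjoint mkop_apply SP_const formal_adjoint_one)

lemma coeffs_zero_Cmap: "A \<in> Dk k \<Longrightarrow> coeffs k (Cmap k A) 0 = P0s_coeff k (coeffs k A)"
  by (simp add: coeffs_zero_eq_apply_one Cmap_Dk Cmap_apply_one)

lemma P0_Cmap: "A \<in> Dk k \<Longrightarrow> P0 k (Cmap k A) = P0s k A"
  by (simp add: P0_eq_mult_op P0s_eq_mult_op coeffs_zero_Cmap)

lemma P0s_coeff_eq: "P0s_coeff k a = (\<lambda>x. a 0 x - (\<Sum>j<k. (-1) ^ j * Dn (Suc j) (a (Suc j)) x))"
  by (simp add: P0s_coeff_def sum.atMost_shift sum_negf)

lemma deriv_P1_coeff:
  assumes "\<And>i. a i \<in> SP"
  shows "deriv (P1_coeff k a) = (\<lambda>x. a 0 x - P0s_coeff k a x)"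
  using assms
  by (simp add: P1_coeff_def P0s_coeff_eq deriv_sum_smooth deriv_cmult_smooth smooth_cmult
      smooth_Dn SP_smooth)

lemma period_integral_P0s_coeff:
  assumes "\<And>i. a i \<in> SP"
  shows "period_integral (P0s_coeff k a) = period_integral (a 0)"
proof -
  have "period_integral (deriv (Dn j (a (Suc j)))) = 0" for j
    using assms by (intro period_integral_deriv SP_Dn)
  then show ?thesis
    using assms
    by (simp add: P0s_coeff_eq period_integral_diff period_integral_sum
        SP_sum SP_cmult SP_Dn SP_deriv)
qed

section \<open>The formal adjoint\<close>

lemma period_integral_diffop_formal_adjoint:
  assumes a: "\<And>i. a i \<in> SP" and "\<phi> \<in> SP" "\<psi> \<in> SP"
  shows "period_integral (\<lambda>x. \<psi> x * diffop k a \<phi> x)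
       = period_integral (\<lambda>x. \<phi> x * formal_adjoint k a \<psi> x)"
proof -
  have "period_integral (\<lambda>x. \<psi> x * diffop k a \<phi> x)
      = (\<Sum>i\<le>k. period_integral (\<lambda>x. (a i x * \<psi> x) * Dn i \<phi> x))"
    unfolding diffop_def sum_distrib_left using assms
    by (subst period_integral_sum) (simp_all add: mult.left_commute mult.commute SP_mult SP_Dn)
  also have "\<dots> = (\<Sum>i\<le>k. (-1) ^ i * period_integral (\<lambda>x. \<phi> x * Dn i (\<lambda>y. a i y * \<psi> y) x))"
  proof (intro sum.cong refl)
    fix i
    have "(\<lambda>x. Dn i (\<lambda>y. a i y * \<psi> y) x * \<phi> x) = (\<lambda>x. \<phi> x * Dn i (\<lambda>y. a i y * \<psi> y) x)"
      by (simp add: mult.commute)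
    then show "period_integral (\<lambda>x. (a i x * \<psi> x) * Dn i \<phi> x)
        = (-1) ^ i * period_integral (\<lambda>x. \<phi> x * Dn i (\<lambda>y. a i y * \<psi> y) x)"
      using period_integral_by_parts_Dn[OF SP_mult[OF a \<open>\<psi> \<in> SP\<close>] \<open>\<phi> \<in> SP\<close>, of i] by simp
  qed
  also have "\<dots> = (\<Sum>i\<le>k. period_integral (\<lambda>x. (-1) ^ i * (\<phi> x * Dn i (\<lambda>y. a i y * \<psi> y) x)))"
    by simp
  also have "\<dots> = period_integral (\<lambda>x. \<phi> x * formal_adjoint k a \<psi> x)"
    unfolding formal_adjoint_def sum_distrib_left using assms
    by (subst period_integral_sum) (simp_all add: mult.left_commute SP_mult SP_cmult SP_Dn)
  finally show ?thesis .
qed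

lemma Dk_Cmap_pairing:
  assumes "A \<in> Dk k" "\<phi> \<in> SP" "\<psi> \<in> SP"
  shows "period_integral (\<lambda>x. \<psi> x * A \<phi> x) = period_integral (\<lambda>x. \<phi> x * Cmap k A \<psi> x)"
  using period_integral_diffop_formal_adjoint[OF Dk_coeffs_SP[OF assms(1)] assms(2,3)] assms
  by (simp add: Dk_apply Cmap_eq_formal_adjoint mkop_apply)

lemma Dk_eqI_weak:
  assumes "A \<in> Dk k" "B \<in> Dk k"
    and "\<And>\<phi> \<psi>. \<phi> \<in> SP \<Longrightarrow> \<psi> \<in> SP \<Longrightarrow>
      period_integral (\<lambda>x. \<phi> x * A \<psi> x) = period_integral (\<lambda>x. \<phi> x * B \<psi> x)"
  shows "A = B"
proof
  fix \<psi>
  show "A \<psi> = B \<psi>"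
  proof (cases "\<psi> \<in> SP")
    case True
    have "(\<lambda>x. A \<psi> x - B \<psi> x) = (\<lambda>x. 0)"
    proof (rule SP_eq_0_if_orthogonal)
      have "A \<psi> \<in> SP" "B \<psi> \<in> SP"
        using assms(1,2) True by (simp_all add: Dk_apply_SP)
      then show "(\<lambda>x. A \<psi> x - B \<psi> x) \<in> SP"
        by (rule SP_diff)
      fix \<phi> :: "real \<Rightarrow> real"
      assume "\<phi> \<in> SP"
      have "period_integral (\<lambda>x. \<phi> x * (A \<psi> x - B \<psi> x))
          = period_integral (\<lambda>x. \<phi> x * A \<psi> x) - period_integral (\<lambda>x. \<phi> x * B \<psi> x)"
        unfolding right_diff_distrib
        using SP_mult[OF \<open>\<phi> \<in> SP\<close> \<open>A \<psi> \<in> SP\<close>] SP_mult[OF \<open>\<phi> \<in> SP\<close> \<open>B \<psi> \<in> SP\<close>]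
        by (rule period_integral_diff)
      then show "period_integral (\<lambda>x. \<phi> x * (A \<psi> x - B \<psi> x)) = 0"
        using assms(3)[OF \<open>\<phi> \<in> SP\<close> True] by simp
    qed
    then show ?thesis
      by (simp add: fun_eq_iff)
  next
    case False
    then show ?thesis
      using assms(1,2) by (simp add: Dk_outside_SP)
  qed
qed

lemma Cmap_Cmap:
  assumes "A \<in> Dk k"
  shows "Cmap k (Cmap k A) = A"
  using Cmap_Dk[OF Cmap_Dk[OF assms]] assms
proof (rule Dk_eqI_weak)
  fix \<phi> \<psi> :: "real \<Rightarrow> real"
  assume "\<phi> \<in> SP" "\<psi> \<in> SP"
  then show "period_integral (\<lambda>x. \<phi> x * Cmap k (Cmap k A) \<psi> x) = period_integral (\<lambda>x. \<phi> x * A \<psi> x)"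
    using Dk_Cmap_pairing[OF Cmap_Dk[OF assms], of \<phi> \<psi>] Dk_Cmap_pairing[OF assms, of \<psi> \<phi>]
    by simp
qed

lemma P0s_coeff_Cmap: "A \<in> Dk k \<Longrightarrow> P0s_coeff k (coeffs k (Cmap k A)) = coeffs k A 0"
  using coeffs_zero_Cmap[OF Cmap_Dk, of A k] by (simp add: Cmap_Cmap)

section \<open>The coefficient of \<open>P\<^sub>1\<close> as a primitive\<close>

definition deriv_coeffs :: "nat \<Rightarrow> (nat \<Rightarrow> real \<Rightarrow> real) \<Rightarrow> nat \<Rightarrow> real \<Rightarrow> real" where
  "deriv_coeffs n a j =
     (\<lambda>x. (if j \<le> n then deriv (a j) x else 0) + (if j = 0 then 0 else a (j - 1) x))"

lemma deriv_diffop: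
  assumes "\<And>i. a i \<in> SP" "\<phi> \<in> SP"
  shows "deriv (diffop n a \<phi>) = diffop (Suc n) (deriv_coeffs n a) \<phi>"
proof
  fix x
  have "deriv (diffop n a \<phi>) x
      = (\<Sum>i\<le>n. deriv (a i) x * Dn i \<phi> x) + (\<Sum>i\<le>n. a i x * Dn (Suc i) \<phi> x)"
    using assms
    by (simp add: diffop_def deriv_sum_smooth deriv_mult_smooth SP_smooth SP_mult SP_Dn
        sum.distrib add.commute)
  also have "\<dots> = (\<Sum>j\<le>Suc n. (if j \<le> n then deriv (a j) x else 0) * Dn j \<phi> x)
      + (\<Sum>j\<le>Suc n. (if j = 0 then 0 else a (j - 1) x) * Dn j \<phi> x)"
  proof -
    have "(\<Sum>j\<le>Suc n. (if j = 0 then 0 else a (j - 1) x) * Dn j \<phi> x)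
        = (\<Sum>i\<le>n. a i x * Dn (Suc i) \<phi> x)"
      by (simp only: sum.atMost_Suc_shift) simp
    then show ?thesis
      by (simp add: sum.atMost_Suc del: funpow.simps)
  qed
  also have "\<dots> = diffop (Suc n) (deriv_coeffs n a) \<phi> x"
    by (simp add: diffop_def deriv_coeffs_def distrib_right sum.distrib del: funpow.simps)
  finally show "deriv (diffop n a \<phi>) x = diffop (Suc n) (deriv_coeffs n a) \<phi> x" .
qed

text \<open>Comparing coefficients in \<open>(H \<phi>)' = 0\<close> from the top order downwards kills all
  coefficients of \<open>H\<close>.\<close>

lemma is_diffop_eq_0_if_deriv_eq_0:
  assumes "is_diffop n H" "\<And>\<phi>. \<phi> \<in> SP \<Longrightarrow> deriv (H \<phi>) = (\<lambda>x. 0)" "\<phi> \<in> SP"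
  shows "H \<phi> = (\<lambda>x. 0)"
proof -
  obtain h where h: "\<And>i. h i \<in> SP" "\<And>\<phi>. \<phi> \<in> SP \<Longrightarrow> H \<phi> = diffop n h \<phi>"
    using assms(1) unfolding is_diffop_def by blast
  have deriv_coeffs_0: "deriv_coeffs n h j = (\<lambda>x. 0)" if "j \<le> Suc n" for j
  proof (rule diffop_coeffs_unique[OF _ that])
    show "diffop (Suc n) (deriv_coeffs n h) \<psi> = diffop (Suc n) (\<lambda>i x. 0) \<psi>" if "\<psi> \<in> SP" for \<psi>
      using assms(2)[OF that] deriv_diffop[OF h(1) that, of n] h(2)[OF that]
      by (simp add: diffop_def)
  qed
  have top_down: "h (n - m) = (\<lambda>x. 0)" if "m \<le> n" for m
    using that
  proof (induction m)
    case 0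
    have "deriv_coeffs n h (Suc n) = h n"
      by (simp add: deriv_coeffs_def)
    then show ?case
      using deriv_coeffs_0[of "Suc n"] by simp
  next
    case (Suc m)
    then have "deriv (h (n - m)) = (\<lambda>x. 0)"
      by simp
    moreover have "deriv_coeffs n h (n - m) = (\<lambda>x. deriv (h (n - m)) x + h (n - Suc m) x)"
      using Suc.prems by (auto simp: deriv_coeffs_def)
    ultimately show ?case
      using deriv_coeffs_0[of "n - m"] by (simp add: fun_eq_iff)
  qed
  have "h i = (\<lambda>x. 0)" if "i \<le> n" for i
    using top_down[of "n - i"] that by simp
  then show ?thesis
    using h(2)[OF assms(3)] by (simp add: diffop_def)
qed

lemma deriv_alternating_Leibniz_sum:
  assumes "smooth u" "smooth \<phi>"
  shows "deriv (\<lambda>x. \<Sum>m\<le>j. (-1) ^ m * Dn m u x * Dn (j - m) \<phi> x)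
       = (\<lambda>x. u x * Dn (Suc j) \<phi> x - (-1) ^ Suc j * Dn (Suc j) u x * \<phi> x)"
proof
  fix x
  define s where "s m = (-1) ^ m * Dn m u x * Dn (Suc j - m) \<phi> x" for m
  have deriv_term: "deriv (\<lambda>x. (-1) ^ m * Dn m u x * Dn (j - m) \<phi> x) x = s m - s (Suc m)"
    if "m \<le> j" for m
  proof -
    have "deriv (\<lambda>x. (-1) ^ m * Dn m u x * Dn (j - m) \<phi> x) x
        = (-1) ^ m * Dn m u x * deriv (Dn (j - m) \<phi>) x
          + (-1) ^ m * deriv (Dn m u) x * Dn (j - m) \<phi> x"
      using assms by (simp add: deriv_mult_smooth deriv_cmult_smooth smooth_cmult smooth_Dn)
    moreover have "Suc j - m = Suc (j - m)"
      using that by simp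
    ultimately show ?thesis
      by (simp add: s_def algebra_simps)
  qed
  have "deriv (\<lambda>x. \<Sum>m\<le>j. (-1) ^ m * Dn m u x * Dn (j - m) \<phi> x) x
      = (\<Sum>m<Suc j. s m - s (Suc m))"
    using assms deriv_term
    by (simp add: deriv_sum_smooth smooth_mult smooth_cmult smooth_Dn lessThan_Suc_atMost
        del: funpow.simps)
  also have "\<dots> = s 0 - s (Suc j)"
    by (rule sum_lessThan_telescope')
  finally show "deriv (\<lambda>x. \<Sum>m\<le>j. (-1) ^ m * Dn m u x * Dn (j - m) \<phi> x) x
      = u x * Dn (Suc j) \<phi> x - (-1) ^ Suc j * Dn (Suc j) u x * \<phi> x"
    by (simp add: s_def del: funpow.simps)
qed

definition primitive_op :: "nat \<Rightarrow> (nat \<Rightarrow> real \<Rightarrow> real) \<Rightarrow> op" where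
  "primitive_op k a \<phi> = (\<lambda>x. \<Sum>j<k. \<Sum>m\<le>j. (-1) ^ m * Dn m (a (Suc j)) x * Dn (j - m) \<phi> x)"

lemma is_diffop_primitive_op:
  assumes "\<And>i. a i \<in> SP"
  shows "is_diffop k (primitive_op k a)"
  unfolding primitive_op_def[abs_def]
  by (intro is_diffop_sum is_diffop_monomial SP_cmult SP_Dn assms) auto

lemma primitive_op_one: "primitive_op k a (\<lambda>x. 1) = P1_coeff k a"
proof -
  have "(\<Sum>m\<le>j. (-1) ^ m * Dn m b x * Dn (j - m) (\<lambda>x. 1) x) = (-1) ^ j * Dn j b x" for j b x
  proof -
    have "(\<Sum>m\<le>j. (-1) ^ m * Dn m b x * Dn (j - m) (\<lambda>x. 1) x)
        = (\<Sum>m\<le>j. if m = j then (-1) ^ j * Dn j b x else 0)"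
      by (intro sum.cong) (auto simp: Dn_const)
    then show ?thesis
      by simp
  qed
  then show ?thesis
    by (simp add: primitive_op_def P1_coeff_def)
qed

lemma deriv_primitive_op:
  assumes "\<And>i. a i \<in> SP" "\<phi> \<in> SP"
  shows "deriv (primitive_op k a \<phi>) = (\<lambda>x. diffop k a \<phi> x - P0s_coeff k a x * \<phi> x)"
proof -
  have "smooth (\<lambda>x. \<Sum>m\<le>j. (-1) ^ m * Dn m (a (Suc j)) x * Dn (j - m) \<phi> x)" for j
    using assms by (intro smooth_sum smooth_mult smooth_cmult smooth_Dn SP_smooth)
  then have "deriv (primitive_op k a \<phi>)
      = (\<lambda>x. \<Sum>j<k. deriv (\<lambda>x. \<Sum>m\<le>j. (-1) ^ m * Dn m (a (Suc j)) x * Dn (j - m) \<phi> x) x)"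
    unfolding primitive_op_def by (rule deriv_sum_smooth)
  also have "\<dots> = (\<lambda>x. \<Sum>j<k. a (Suc j) x * Dn (Suc j) \<phi> x
      - (-1) ^ Suc j * Dn (Suc j) (a (Suc j)) x * \<phi> x)"
    using assms by (simp only: deriv_alternating_Leibniz_sum SP_smooth)
  also have "\<dots> = (\<lambda>x. diffop k a \<phi> x - P0s_coeff k a x * \<phi> x)"
    by (simp add: diffop_def P0s_coeff_def sum.atMost_shift sum_subtractf sum_distrib_left
        sum.distrib sum_negf algebra_simps del: funpow.simps)
  finally show ?thesis .
qed

text \<open>Two operators \<open>H\<close> as below differ by one annihilated by \<open>d\<close>, so \<open>H\<close> agrees with
  \<open>primitive_op k a\<close>.\<close>

lemma P1_coeff_eq_apply_one:
  assumes "\<And>i. a i \<in> SP" "is_diffop k H"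
    and "\<And>\<phi>. \<phi> \<in> SP \<Longrightarrow> deriv (H \<phi>) = (\<lambda>x. diffop k a \<phi> x - P0s_coeff k a x * \<phi> x)"
  shows "H (\<lambda>x. 1) = P1_coeff k a"
proof -
  let ?D = "\<lambda>\<phi> x. H \<phi> x - primitive_op k a \<phi> x"
  have "?D (\<lambda>x. 1) = (\<lambda>x. 0)"
  proof (rule is_diffop_eq_0_if_deriv_eq_0[of k ?D])
    show "is_diffop k ?D"
      using assms(1,2) by (intro is_diffop_diff is_diffop_primitive_op)
    show "deriv (?D \<phi>) = (\<lambda>x. 0)" if "\<phi> \<in> SP" for \<phi>
    proof -
      have "smooth (H \<phi>)" "smooth (primitive_op k a \<phi>)"
        using is_diffop_SP[OF assms(2) that]
          is_diffop_SP[OF is_diffop_primitive_op[OF assms(1)] that]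
        by (simp_all add: SP_smooth)
      then show ?thesis
        using assms(3)[OF that] deriv_primitive_op[OF assms(1) that]
        by (simp add: deriv_diff_smooth)
    qed
  qed (rule SP_const)
  then show ?thesis
    by (simp add: fun_eq_iff primitive_op_one)
qed

lemma P1_coeff_Cmap:
  assumes "A \<in> Dk k"
  shows "P1_coeff k (coeffs k (Cmap k A)) = (\<lambda>x. - P1_coeff k (coeffs k A) x)"
proof -
  define a where "a = coeffs k A"
  define c where "c = coeffs k (Cmap k A)"
  have a: "a i \<in> SP" "c i \<in> SP" for i
    using Dk_coeffs_SP[OF assms] Dk_coeffs_SP[OF Cmap_Dk[OF assms]] by (simp_all add: a_def c_def)
  define H where "H \<psi> = (\<lambda>x. \<Sum>j<k. (-1) ^ Suc j * Dn j (\<lambda>y. a (Suc j) y * \<psi> y) x)" for \<psi>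
  have "is_diffop k H"
    unfolding H_def[abs_def] using a by (intro is_diffop_sum is_diffop_cmult is_diffop_Dn_mult) auto
  moreover have "deriv (H \<psi>) = (\<lambda>x. diffop k c \<psi> x - P0s_coeff k c x * \<psi> x)" if "\<psi> \<in> SP" for \<psi>
  proof -
    have "smooth (\<lambda>x. (-1) ^ Suc j * Dn j (\<lambda>y. a (Suc j) y * \<psi> y) x)" for j
      using a that by (intro smooth_cmult smooth_Dn SP_smooth SP_mult)
    then have "deriv (H \<psi>)
        = (\<lambda>x. \<Sum>j<k. deriv (\<lambda>x. (-1) ^ Suc j * Dn j (\<lambda>y. a (Suc j) y * \<psi> y) x) x)"
      unfolding H_def by (rule deriv_sum_smooth)
    also have "\<dots> = (\<lambda>x. \<Sum>j<k. (-1) ^ Suc j * deriv (Dn j (\<lambda>y. a (Suc j) y * \<psi> y)) x)"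
      using a that by (simp only: deriv_cmult_smooth smooth_Dn SP_smooth SP_mult)
    also have "\<dots> = (\<lambda>x. formal_adjoint k a \<psi> x - a 0 x * \<psi> x)"
      by (simp add: formal_adjoint_def sum.atMost_shift)
    also have "formal_adjoint k a \<psi> = diffop k c \<psi>"
      using Dk_apply[OF Cmap_Dk[OF assms] that] that
      by (simp add: Cmap_eq_formal_adjoint mkop_apply a_def c_def)
    also have "a 0 = P0s_coeff k c"
      using coeffs_zero_Cmap[OF Cmap_Dk[OF assms]] by (simp add: Cmap_Cmap[OF assms] a_def c_def)
    finally show ?thesis .
  qed
  ultimately have "H (\<lambda>x. 1) = P1_coeff k c"
    using a by (intro P1_coeff_eq_apply_one)
  moreover have "H (\<lambda>x. 1) = (\<lambda>x. - P1_coeff k a x)"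
    by (simp add: H_def P1_coeff_def sum_negf)
  ultimately show ?thesis
    by (simp add: a_def c_def)
qed

lemma deriv_op_neg: "deriv_op (\<lambda>x. - h x) = opneg (deriv_op h)"
  by (auto simp: deriv_op_def mkop_def opneg_def fun_eq_iff)

section \<open>Invariance under diffeomorphisms\<close>

lemma act_mult_op:
  assumes "f \<in> Diffp"
  shows "act f (mult_op h) = mult_op (\<lambda>x. deriv (inv f) x * h (inv f x))"
  unfolding mult_op_def act_mkop[OF assms]
  by (rule mkop_cong) (simp add: Diffp_f_inv[OF assms] ac_simps)

lemma act_deriv_op:
  assumes "f \<in> Diffp"
  shows "act f (deriv_op h) = deriv_op (\<lambda>x. h (inv f x))"
  unfolding deriv_op_def act_mkop[OF assms]
proof (rule mkop_cong)
  fix \<phi> :: "real \<Rightarrow> real"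
  assume "\<phi> \<in> SP"
  have "deriv (inv f) x * deriv (\<lambda>y. \<phi> (f y)) (inv f x) = deriv \<phi> x" for x
  proof -
    have "((\<lambda>y. \<phi> (f y)) has_real_derivative deriv \<phi> (f (inv f x)) * deriv f (inv f x))
        (at (inv f x))"
      using \<open>\<phi> \<in> SP\<close> assms
      by (intro DERIV_chain2 smooth_has_real_derivative SP_smooth Diffp_smooth)
    then show ?thesis
      using Diffp_deriv_mult_deriv_inv[OF assms, of x]
      by (simp add: DERIV_imp_deriv Diffp_f_inv[OF assms] mult.commute mult.left_commute)
  qed
  then show "(\<lambda>x. deriv (inv f) x * (h (inv f x) * deriv (\<lambda>y. \<phi> (f y)) (inv f x)))
      = (\<lambda>x. h (inv f x) * deriv \<phi> x)"
    by (simp add: fun_eq_iff mult.left_commute)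
qed

lemma coeffs_zero_act:
  assumes "A \<in> Dk k" "f \<in> Diffp"
  shows "coeffs k (act f A) 0 = (\<lambda>x. deriv (inv f) x * coeffs k A 0 (inv f x))"
  using assms
  by (simp add: coeffs_zero_eq_apply_one act_Dk act_apply SP_const)

lemma P0_act: "A \<in> Dk k \<Longrightarrow> f \<in> Diffp \<Longrightarrow> P0 k (act f A) = act f (P0 k A)"
  by (simp add: P0_eq_mult_op coeffs_zero_act act_mult_op)

lemma Cmap_act:
  assumes A: "A \<in> Dk k" and f: "f \<in> Diffp"
  shows "Cmap k (act f A) = act f (Cmap k A)"
proof (rule Dk_eqI_weak[OF Cmap_Dk[OF act_Dk[OF A f]] act_Dk[OF Cmap_Dk[OF A] f]])
  fix \<phi> \<psi> :: "real \<Rightarrow> real"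
  assume "\<phi> \<in> SP" "\<psi> \<in> SP"
  let ?g = "inv f"
  have \<phi>f: "(\<lambda>y. \<phi> (f y)) \<in> SP" and \<psi>f: "(\<lambda>y. \<psi> (f y)) \<in> SP"
    using \<open>\<phi> \<in> SP\<close> \<open>\<psi> \<in> SP\<close> f by (simp_all add: SP_compose_Diffp)
  have "period_integral (\<lambda>x. \<phi> x * Cmap k (act f A) \<psi> x)
      = period_integral (\<lambda>x. \<psi> x * act f A \<phi> x)"
    using Dk_Cmap_pairing[OF act_Dk[OF A f] \<open>\<phi> \<in> SP\<close> \<open>\<psi> \<in> SP\<close>] by simp
  also have "\<dots> = period_integral (\<lambda>x. deriv ?g x * (\<psi> (f (?g x)) * A (\<lambda>y. \<phi> (f y)) (?g x)))"
    using \<open>\<phi> \<in> SP\<close> by (simp add: act_apply[OF f] Diffp_f_inv[OF f] ac_simps)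
  also have "\<dots> = period_integral (\<lambda>y. \<psi> (f y) * A (\<lambda>y. \<phi> (f y)) y)"
    by (rule period_integral_Diffp_substitution[OF Diffp_inv[OF f]
          SP_mult[OF \<psi>f Dk_apply_SP[OF A \<phi>f]]])
  also have "\<dots> = period_integral (\<lambda>y. \<phi> (f y) * Cmap k A (\<lambda>y. \<psi> (f y)) y)"
    by (rule Dk_Cmap_pairing[OF A \<phi>f \<psi>f])
  also have "\<dots> = period_integral (\<lambda>x. deriv ?g x * (\<phi> (f (?g x)) * Cmap k A (\<lambda>y. \<psi> (f y)) (?g x)))"
    by (rule period_integral_Diffp_substitution[OF Diffp_inv[OF f]
          SP_mult[OF \<phi>f Dk_apply_SP[OF Cmap_Dk[OF A] \<psi>f]], symmetric])
  also have "\<dots> = period_integral (\<lambda>x. \<phi> x * act f (Cmap k A) \<psi> x)"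
    using \<open>\<psi> \<in> SP\<close> by (simp add: act_apply[OF f] Diffp_f_inv[OF f] ac_simps)
  finally show "period_integral (\<lambda>x. \<phi> x * Cmap k (act f A) \<psi> x)
      = period_integral (\<lambda>x. \<phi> x * act f (Cmap k A) \<psi> x)" .
qed

lemma P0s_act:
  assumes "A \<in> Dk k" "f \<in> Diffp"
  shows "P0s k (act f A) = act f (P0s k A)"
proof -
  have "P0s k (act f A) = P0 k (Cmap k (act f A))"
    using assms by (simp add: P0_Cmap act_Dk)
  also have "\<dots> = act f (P0 k (Cmap k A))"
    using assms by (simp add: Cmap_act P0_act Cmap_Dk)
  also have "\<dots> = act f (P0s k A)"
    using assms by (simp add: P0_Cmap)
  finally show ?thesis .
qed

lemma Lmap_act:
  assumes "A \<in> Dk k" "f \<in> Diffp"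
  shows "Lmap k (act f A) = act f (Lmap k A)"
proof -
  have "period_integral (coeffs k (act f A) 0) = period_integral (coeffs k A 0)"
    unfolding coeffs_zero_act[OF assms]
    by (rule period_integral_Diffp_substitution[OF Diffp_inv[OF assms(2)]
          Dk_coeffs_SP[OF assms(1)]])
  then show ?thesis
    by (simp add: Lmap_eq_deriv_op act_deriv_op[OF assms(2)])
qed

lemma P0s_coeff_act:
  assumes "A \<in> Dk k" "f \<in> Diffp"
  shows "P0s_coeff k (coeffs k (act f A))
    = (\<lambda>x. deriv (inv f) x * P0s_coeff k (coeffs k A) (inv f x))"
  using assms by (simp add: Cmap_apply_one[symmetric] Cmap_act act_apply SP_const)

text \<open>Conjugating the primitive of \<open>A\<close> by \<open>f\<close> gives a primitive of the transformed operator.\<close>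

lemma P1_coeff_act:
  assumes A: "A \<in> Dk k" and f: "f \<in> Diffp"
  shows "P1_coeff k (coeffs k (act f A)) = (\<lambda>x. P1_coeff k (coeffs k A) (inv f x))"
proof -
  define a where "a = coeffs k A"
  define b where "b = coeffs k (act f A)"
  have a: "a i \<in> SP" "b i \<in> SP" for i
    using Dk_coeffs_SP[OF A] Dk_coeffs_SP[OF act_Dk[OF A f]] by (simp_all add: a_def b_def)
  define H where "H \<phi> = (\<lambda>x. primitive_op k a (\<lambda>y. \<phi> (f y)) (inv f x))" for \<phi>
  have "is_diffop k H"
    unfolding H_def[abs_def] using a f by (intro is_diffop_conj is_diffop_primitive_op)
  moreover have "deriv (H \<phi>) = (\<lambda>x. diffop k b \<phi> x - P0s_coeff k b x * \<phi> x)" if "\<phi> \<in> SP" for \<phi>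
  proof
    fix x
    have \<phi>f: "(\<lambda>y. \<phi> (f y)) \<in> SP"
      using that f by (rule SP_compose_Diffp)
    have "deriv (H \<phi>) x = deriv (primitive_op k a (\<lambda>y. \<phi> (f y))) (inv f x) * deriv (inv f) x"
      unfolding H_def
      using is_diffop_SP[OF is_diffop_primitive_op[OF a(1)] \<phi>f]
      by (intro deriv_compose_inv_Diffp f SP_smooth)
    also have "\<dots> = deriv (inv f) x * (diffop k a (\<lambda>y. \<phi> (f y)) (inv f x)
        - P0s_coeff k a (inv f x) * \<phi> x)"
      using a \<phi>f by (simp add: deriv_primitive_op Diffp_f_inv[OF f] mult.commute)
    also have "\<dots> = diffop k b \<phi> x - P0s_coeff k b x * \<phi> x"
      using that A f \<phi>f P0s_coeff_act[OF A f]
      by (simp add: a_def b_def act_Dk act_apply Dk_apply[symmetric] algebra_simps)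
    finally show "deriv (H \<phi>) x = diffop k b \<phi> x - P0s_coeff k b x * \<phi> x" .
  qed
  ultimately have "H (\<lambda>x. 1) = P1_coeff k b"
    using a by (intro P1_coeff_eq_apply_one)
  then show ?thesis
    by (simp add: H_def primitive_op_one a_def b_def)
qed

lemma P1_act: "A \<in> Dk k \<Longrightarrow> f \<in> Diffp \<Longrightarrow> P1 k (act f A) = act f (P1 k A)"
  by (simp add: P1_eq_deriv_op P1_coeff_act act_deriv_op)

lemma is_coeffs_opadd:
  assumes "A \<in> Dk k" "B \<in> Dk k"
  shows "is_coeffs k (opadd A B) (\<lambda>i x. coeffs k A i x + coeffs k B i x)"
  using assms
  by (auto simp: is_coeffs_iff_diffop SP_add Dk_coeffs_SP Dk_coeffs_above Dk_apply opadd_def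
      diffop_def distrib_right sum.distrib)

lemma is_coeffs_opscale:
  assumes "A \<in> Dk k"
  shows "is_coeffs k (opscale c A) (\<lambda>i x. c * coeffs k A i x)"
  using assms
  by (auto simp: is_coeffs_iff_diffop SP_cmult Dk_coeffs_SP Dk_coeffs_above Dk_apply opscale_def
      diffop_def sum_distrib_left mult.assoc)

lemma coeffs_opadd:
  "A \<in> Dk k \<Longrightarrow> B \<in> Dk k \<Longrightarrow> coeffs k (opadd A B) = (\<lambda>i x. coeffs k A i x + coeffs k B i x)"
  by (rule coeffs_eqI[OF is_coeffs_opadd])

lemma coeffs_opscale: "A \<in> Dk k \<Longrightarrow> coeffs k (opscale c A) = (\<lambda>i x. c * coeffs k A i x)"
  by (rule coeffs_eqI[OF is_coeffs_opscale])

lemma opadd_mkop: "opadd (mkop F) (mkop G) = mkop (\<lambda>\<phi> x. F \<phi> x + G \<phi> x)"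
  by (auto simp: opadd_def mkop_def fun_eq_iff)

lemma opscale_mkop: "opscale c (mkop F) = mkop (\<lambda>\<phi> x. c * F \<phi> x)"
  by (auto simp: opscale_def mkop_def fun_eq_iff)

lemma mult_op_add: "mult_op (\<lambda>x. g x + h x) = opadd (mult_op g) (mult_op h)"
  by (simp add: mult_op_def opadd_mkop distrib_right)

lemma mult_op_cmult: "mult_op (\<lambda>x. c * h x) = opscale c (mult_op h)"
  by (simp add: mult_op_def opscale_mkop mult.assoc)

lemma deriv_op_add: "deriv_op (\<lambda>x. g x + h x) = opadd (deriv_op g) (deriv_op h)"
  by (simp add: deriv_op_def opadd_mkop distrib_right)

lemma deriv_op_cmult: "deriv_op (\<lambda>x. c * h x) = opscale c (deriv_op h)"
  by (simp add: deriv_op_def opscale_mkop mult.assoc)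

lemma P0s_coeff_add:
  "(\<And>i. a i \<in> SP) \<Longrightarrow> (\<And>i. b i \<in> SP) \<Longrightarrow>
    P0s_coeff k (\<lambda>i x. a i x + b i x) = (\<lambda>x. P0s_coeff k a x + P0s_coeff k b x)"
  by (simp add: P0s_coeff_def Dn_add_smooth SP_smooth distrib_left sum.distrib)

lemma P0s_coeff_cmult:
  "(\<And>i. a i \<in> SP) \<Longrightarrow> P0s_coeff k (\<lambda>i x. c * a i x) = (\<lambda>x. c * P0s_coeff k a x)"
  by (simp add: P0s_coeff_def Dn_cmult_smooth SP_smooth sum_distrib_left mult.left_commute)

lemma P1_coeff_add:
  "(\<And>i. a i \<in> SP) \<Longrightarrow> (\<And>i. b i \<in> SP) \<Longrightarrow>
    P1_coeff k (\<lambda>i x. a i x + b i x) = (\<lambda>x. P1_coeff k a x + P1_coeff k b x)"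
  by (simp add: P1_coeff_def Dn_add_smooth SP_smooth distrib_left sum.distrib)

lemma P1_coeff_cmult:
  "(\<And>i. a i \<in> SP) \<Longrightarrow> P1_coeff k (\<lambda>i x. c * a i x) = (\<lambda>x. c * P1_coeff k a x)"
  by (simp add: P1_coeff_def Dn_cmult_smooth SP_smooth sum_distrib_left mult.left_commute)

lemma formal_adjoint_add:
  assumes "\<And>i. a i \<in> SP" "\<And>i. b i \<in> SP" "\<phi> \<in> SP"
  shows "formal_adjoint k (\<lambda>i x. a i x + b i x) \<phi>
    = (\<lambda>x. formal_adjoint k a \<phi> x + formal_adjoint k b \<phi> x)"
proof -
  have "Dn i (\<lambda>y. (a i y + b i y) * \<phi> y)
      = (\<lambda>x. Dn i (\<lambda>y. a i y * \<phi> y) x + Dn i (\<lambda>y. b i y * \<phi> y) x)" for i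
    using Dn_add_smooth[OF SP_smooth[OF SP_mult[OF assms(1,3)]]
        SP_smooth[OF SP_mult[OF assms(2,3)]]]
    by (simp add: distrib_right)
  then show ?thesis
    by (simp add: formal_adjoint_def distrib_left sum.distrib)
qed

lemma formal_adjoint_cmult:
  assumes "\<And>i. a i \<in> SP" "\<phi> \<in> SP"
  shows "formal_adjoint k (\<lambda>i x. c * a i x) \<phi> = (\<lambda>x. c * formal_adjoint k a \<phi> x)"
proof -
  have "Dn i (\<lambda>y. c * a i y * \<phi> y) = (\<lambda>x. c * Dn i (\<lambda>y. a i y * \<phi> y) x)" for i
    using Dn_cmult_smooth[OF SP_smooth[OF SP_mult[OF assms]]] by (simp add: mult.assoc)
  then show ?thesis
    by (simp add: formal_adjoint_def sum_distrib_left mult.left_commute)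
qed

lemma Cmap_add: "A \<in> Dk k \<Longrightarrow> B \<in> Dk k \<Longrightarrow> Cmap k (opadd A B) = opadd (Cmap k A) (Cmap k B)"
  unfolding Cmap_eq_formal_adjoint coeffs_opadd opadd_mkop
  by (intro mkop_cong) (simp add: formal_adjoint_add Dk_coeffs_SP)

lemma Cmap_scale: "A \<in> Dk k \<Longrightarrow> Cmap k (opscale c A) = opscale c (Cmap k A)"
  unfolding Cmap_eq_formal_adjoint coeffs_opscale opscale_mkop
  by (intro mkop_cong) (simp add: formal_adjoint_cmult Dk_coeffs_SP)

lemma P0_add: "A \<in> Dk k \<Longrightarrow> B \<in> Dk k \<Longrightarrow> P0 k (opadd A B) = opadd (P0 k A) (P0 k B)"
  by (simp add: P0_eq_mult_op coeffs_opadd mult_op_add)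

lemma P0_scale: "A \<in> Dk k \<Longrightarrow> P0 k (opscale c A) = opscale c (P0 k A)"
  by (simp add: P0_eq_mult_op coeffs_opscale mult_op_cmult)

lemma P0s_add: "A \<in> Dk k \<Longrightarrow> B \<in> Dk k \<Longrightarrow> P0s k (opadd A B) = opadd (P0s k A) (P0s k B)"
  by (simp add: P0s_eq_mult_op coeffs_opadd P0s_coeff_add Dk_coeffs_SP mult_op_add)

lemma P0s_scale: "A \<in> Dk k \<Longrightarrow> P0s k (opscale c A) = opscale c (P0s k A)"
  by (simp add: P0s_eq_mult_op coeffs_opscale P0s_coeff_cmult Dk_coeffs_SP mult_op_cmult)

lemma P1_add: "A \<in> Dk k \<Longrightarrow> B \<in> Dk k \<Longrightarrow> P1 k (opadd A B) = opadd (P1 k A) (P1 k B)"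
  by (simp add: P1_eq_deriv_op coeffs_opadd P1_coeff_add Dk_coeffs_SP deriv_op_add)

lemma P1_scale: "A \<in> Dk k \<Longrightarrow> P1 k (opscale c A) = opscale c (P1 k A)"
  by (simp add: P1_eq_deriv_op coeffs_opscale P1_coeff_cmult Dk_coeffs_SP deriv_op_cmult)

lemma Lmap_add: "A \<in> Dk k \<Longrightarrow> B \<in> Dk k \<Longrightarrow> Lmap k (opadd A B) = opadd (Lmap k A) (Lmap k B)"
  by (simp add: Lmap_eq_deriv_op coeffs_opadd period_integral_add Dk_coeffs_SP
      flip: deriv_op_add)

lemma Lmap_scale: "A \<in> Dk k \<Longrightarrow> Lmap k (opscale c A) = opscale c (Lmap k A)"
  by (simp add: Lmap_eq_deriv_op coeffs_opscale flip: deriv_op_cmult)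

lemma Cmap_Ik: "Cmap k \<in> Ik k"
  unfolding Ik_def using Cmap_Dk Cmap_add Cmap_scale Cmap_act by blast

lemma P0_Ik: "P0 k \<in> Ik k"
  unfolding Ik_def using P0_Dk P0_add P0_scale P0_act by blast

lemma P0s_Ik: "P0s k \<in> Ik k"
  unfolding Ik_def using P0s_Dk P0s_add P0s_scale P0s_act by blast

lemma P1_Ik: "1 \<le> k \<Longrightarrow> P1 k \<in> Ik k"
  unfolding Ik_def using P1_Dk P1_add P1_scale P1_act by blast

lemma Lmap_Ik: "1 \<le> k \<Longrightarrow> Lmap k \<in> Ik k"
  unfolding Ik_def using Lmap_Dk Lmap_add Lmap_scale Lmap_act by blast

section \<open>The composition table\<close>

lemma mult_op_diff: "mult_op (\<lambda>x. g x - h x) = opminus (mult_op g) (mult_op h)"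
  by (auto simp: mult_op_def mkop_def opminus_def fun_eq_iff left_diff_distrib)

lemma Cmap_mult_op:
  assumes "h \<in> SP"
  shows "Cmap k (mult_op h) = mult_op h"
proof -
  have "formal_adjoint k (coeffs k (mult_op h)) = (\<lambda>\<phi> x. h x * \<phi> x)"
    using assms by (simp add: coeffs_mult_op formal_adjoint_single_coeff fun_eq_iff)
  then show ?thesis
    by (simp add: Cmap_eq_formal_adjoint) (simp add: mult_op_def)
qed

lemma Cmap_deriv_op:
  assumes "h \<in> SP" "1 \<le> k"
  shows "Cmap k (deriv_op h) = opminus (opneg (deriv_op h)) (mult_op (deriv h))"
proof -
  have "formal_adjoint k (coeffs k (deriv_op h)) \<phi> = (\<lambda>x. - (h x * deriv \<phi> x) - deriv h x * \<phi> x)"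
    if "\<phi> \<in> SP" for \<phi>
    using assms that
    by (simp add: coeffs_deriv_op formal_adjoint_single_coeff deriv_mult_smooth SP_smooth)
  then show ?thesis
    unfolding Cmap_eq_formal_adjoint
    by (auto simp: mkop_def opminus_def opneg_def deriv_op_def mult_op_def fun_eq_iff)
qed

lemma Cmap_deriv_op_const: "1 \<le> k \<Longrightarrow> Cmap k (deriv_op (\<lambda>x. c)) = opneg (deriv_op (\<lambda>x. c))"
  by (simp add: Cmap_deriv_op SP_const mult_op_zero opminus_def zero_op_def)

lemma Cmap_P1:
  assumes "A \<in> Dk k" "1 \<le> k"
  shows "Cmap k (P1 k A) = opminus (opminus (P0s k A) (P1 k A)) (P0 k A)"
proof -
  have "Cmap k (P1 k A)
      = opminus (opneg (P1 k A)) (mult_op (\<lambda>x. coeffs k A 0 x - P0s_coeff k (coeffs k A) x))"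
    using assms by (simp add: P1_eq_deriv_op Cmap_deriv_op deriv_P1_coeff P1_coeff_SP Dk_coeffs_SP)
  then show ?thesis
    by (simp add: mult_op_diff P0s_eq_mult_op P0_eq_mult_op opminus_def opneg_def fun_eq_iff
        algebra_simps)
qed

lemmas normal_forms = P0_eq_mult_op P0s_eq_mult_op P1_eq_deriv_op Lmap_eq_deriv_op

lemmas normal_form_coeffs =
  coeffs_mult_op coeffs_deriv_op single_coeff_same single_coeff_other
  P0s_coeff_single_coeff P1_coeff_single_coeff_0 P1_coeff_single_coeff_Suc
  coeffs_zero_Cmap P0s_coeff_Cmap P1_coeff_Cmap deriv_P1_coeff period_integral_P0s_coeff
  Dk_coeffs_SP P0s_coeff_SP P1_coeff_SP SP_const

theorem proposition5p1:
  fixes k :: nat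
  assumes "k \<ge> 1"
  shows "Cmap k \<in> Ik k \<and> P0 k \<in> Ik k \<and> P0s k \<in> Ik k \<and> P1 k \<in> Ik k \<and> Lmap k \<in> Ik k \<and>
    (\<forall>A\<in>Dk k.
      P0 k (P0 k A) = P0 k A \<and>
      P0 k (Cmap k A) = P0s k A \<and>
      P0 k (P0s k A) = P0s k A \<and>
      P0 k (P1 k A) = zero_op \<and>
      P0 k (Lmap k A) = zero_op \<and>
      Cmap k (P0 k A) = P0 k A \<and>
      Cmap k (Cmap k A) = A \<and>
      Cmap k (P0s k A) = P0s k A \<and>
      Cmap k (P1 k A) = opminus (opminus (P0s k A) (P1 k A)) (P0 k A) \<and>
      Cmap k (Lmap k A) = opneg (Lmap k A) \<and>
      P0s k (P0 k A) = P0 k A \<and>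
      P0s k (Cmap k A) = P0 k A \<and>
      P0s k (P0s k A) = P0s k A \<and>
      P0s k (P1 k A) = opminus (P0s k A) (P0 k A) \<and>
      P0s k (Lmap k A) = zero_op \<and>
      P1 k (P0 k A) = zero_op \<and>
      P1 k (Cmap k A) = opneg (P1 k A) \<and>
      P1 k (P0s k A) = zero_op \<and>
      P1 k (P1 k A) = P1 k A \<and>
      P1 k (Lmap k A) = Lmap k A \<and>
      Lmap k (P0 k A) = Lmap k A \<and>
      Lmap k (Cmap k A) = Lmap k A \<and>
      Lmap k (P0s k A) = Lmap k A \<and>
      Lmap k (P1 k A) = zero_op \<and>
      Lmap k (Lmap k A) = zero_op)"
  using assms
  by (intro conjI ballI Cmap_Ik P0_Ik P0s_Ik P1_Ik Lmap_Ik)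
    (simp_all add: Cmap_Cmap Cmap_mult_op Cmap_deriv_op_const Cmap_P1[unfolded normal_forms]
      normal_forms normal_form_coeffs mult_op_zero deriv_op_zero deriv_op_neg mult_op_diff)

end
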